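(* Let the setting be as in the context, with $\mathsf Z$ a topological space and $\mathscr Z$ its Borel $\sigma$-algebra. Suppose Assumption (A) holds with data $(g,n,m,d)$, let $m',d'>0$ satisfy $m+2m'>1$, $\beta(m+2m')<1$, $d'\ge d/(m+2m'-1)$, and let $\ell$ be the associated weight function. Suppose further that: (i) $P$ has the Feller property, i.e. $z\mapsto\int h(z')P(z,dz')$ is bounded and continuous whenever $h$ is bounded and continuous; (ii) $c$, $r$ and $z\mapsto\int|r(z')|P(z,dz')$ are continuous; (iii) $\ell$ and $z\mapsto\int\ell(z')P(z,dz')$ are continuous. Then $\psi^*$ and $v^*$ are continuous.
   Context: $P$ is a stochastic kernel on $(\mathsf Z,\mathscr Z)$, $P^0(z,\cdot)=\delta_z$, $P^n(z,B)=\int P(z',B)P^{n-1}(z,dz')$; $(Z_t)$ is a time-homogeneous Markov process with kernel $P$ adapted to a filtration $(\mathscr F_t)$; $\mathbb E_z h(Z_t)=\int h\,dP^t(z,\cdot)$. $\mathscr M$ is the set of a.s. finite $\mathbb N_0$-valued stopping times. $\beta\in(0,1)$; $r,c:\mathsf Z\to\mathbb R$ measurable. $v^*(z)=\sup_{\tau\in\mathscr M}\mathbb E_z\{\sum_{t=0}^{\tau-1}\beta^tc(Z_t)+\beta^\tau r(Z_\tau)\}$, $\psi^*(z)=c(z)+\beta\int v^*(z')P(z,dz')$. Assumption (A): there exist measurable $g:\mathsf Z\to\mathbb R_+$, $n\in\mathbb N_0$, $m,d\ge0$ with $\beta m<1$ such that $\max\{\int|r|dP^n(z,\cdot),\int|c|dP^n(z,\cdot)\}\le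 g(z)$ and $\int g(z')P(z,dz')\le mg(z)+d$ for all $z$. Weight function: $\ell(z)=m'\big(\sum_{t=1}^{n-1}\mathbb E_z|r(Z_t)|+\sum_{t=0}^{n-1}\mathbb E_z|c(Z_t)|\big)+g(z)+d'$. *)

theory Defs
  imports "HOL-Probability.Probability"
begin

primrec kpow :: "('z::topological_space \<Rightarrow> 'z measure) \<Rightarrow> nat \<Rightarrow> 'z \<Rightarrow> 'z measure" where
  "kpow P 0 z = return borel z"
| "kpow P (Suc k) z = kpow P k z \<bind> P"

text \<open>The Markov property is stated as: for A in F_t and Borel B,
  Prob(A and X_(t+1) in B) = E[1_A P(X_t, B)], i.e. Prob(X_(t+1) in B | F_t) = P(X_t, B).\<close>
definition markov_process ::
  "('z::topological_space \<Rightarrow> 'z measure) \<Rightarrow> 'z \<Rightarrow> 'w measure \<Rightarrow> (nat \<Rightarrow> 'w measure) \<Rightarrow> (nat \<Rightarrow> 'w \<Rightarrow> 'z) \<Rightarrow> bool"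
where
  "markov_process P z M F X \<longleftrightarrow>
     prob_space M
   \<and> (\<forall>t. space (F t) = space M \<and> sets (F t) \<subseteq> sets M)
   \<and> (\<forall>s t. s \<le> t \<longrightarrow> sets (F s) \<subseteq> sets (F t))
   \<and> (\<forall>t. X t \<in> F t \<rightarrow>\<^sub>M borel)
   \<and> (AE \<omega> in M. X 0 \<omega> = z)
   \<and> (\<forall>t. \<forall>A\<in>sets (F t). \<forall>B\<in>sets borel.
        measure M (A \<inter> {\<omega>\<in>space M. X (Suc t) \<omega> \<in> B})
          = (\<integral>\<omega>. indicator A \<omega> * measure (P (X t \<omega>)) B \<partial>M))"

definition enat_stopping_time :: "(nat \<Rightarrow> 'w measure) \<Rightarrow> ('w \<Rightarrow> enat) \<Rightarrow> bool" where
  "enat_stopping_time F \<tau> \<longleftrightarrow> (\<forall>t::nat. Measurable.pred (F t) (\<lambda>\<omega>. \<tau> \<omega> \<le> enat t))"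

definition v_star ::
  "real \<Rightarrow> ('z \<Rightarrow> real) \<Rightarrow> ('z \<Rightarrow> real) \<Rightarrow> ('z \<Rightarrow> 'w measure) \<Rightarrow> ('z \<Rightarrow> nat \<Rightarrow> 'w measure)
    \<Rightarrow> ('z \<Rightarrow> nat \<Rightarrow> 'w \<Rightarrow> 'z) \<Rightarrow> 'z \<Rightarrow> real"
where
  "v_star \<beta> r c M F X z =
     (SUP \<tau> \<in> {\<tau>. enat_stopping_time (F z) \<tau> \<and> (AE \<omega> in M z. \<tau> \<omega> \<noteq> \<infinity>)}.
        \<integral>\<omega>. (\<Sum>t<the_enat (\<tau> \<omega>). \<beta> ^ t * c (X z t \<omega>))
              + \<beta> ^ the_enat (\<tau> \<omega>) * r (X z (the_enat (\<tau> \<omega>)) \<omega>) \<partial>M z)"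

definition psi_star ::
  "('z \<Rightarrow> 'z measure) \<Rightarrow> real \<Rightarrow> ('z \<Rightarrow> real) \<Rightarrow> ('z \<Rightarrow> real) \<Rightarrow> ('z \<Rightarrow> 'w measure)
    \<Rightarrow> ('z \<Rightarrow> nat \<Rightarrow> 'w measure) \<Rightarrow> ('z \<Rightarrow> nat \<Rightarrow> 'w \<Rightarrow> 'z) \<Rightarrow> 'z \<Rightarrow> real"
where
  "psi_star P \<beta> r c M F X z = c z + \<beta> * (\<integral>z'. v_star \<beta> r c M F X z' \<partial>P z)"

text \<open>Weight function ell, using E_z h(Z_t) = int h dP^t(z,.).\<close>
definition ell ::
  "('z::topological_space \<Rightarrow> 'z measure) \<Rightarrow> ('z \<Rightarrow> real) \<Rightarrow> ('z \<Rightarrow> real) \<Rightarrow> ('z \<Rightarrow> real)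
    \<Rightarrow> nat \<Rightarrow> real \<Rightarrow> real \<Rightarrow> 'z \<Rightarrow> real"
where
  "ell P r c g n m' d' z =
     m' * ((\<Sum>t\<in>{1..<n}. \<integral>z'. \<bar>r z'\<bar> \<partial>kpow P t z) + (\<Sum>t<n. \<integral>z'. \<bar>c z'\<bar> \<partial>kpow P t z))
     + g z + d'"

end

theory Submission
  imports Defs
begin

text \<open>Let \<open>\<kappa> = m + 2 m'\<close>. Assumption (A) gives the drift inequality \<open>P \<ell> \<le> \<kappa> \<ell>\<close> for the
  weight \<open>\<ell>\<close>, and \<open>|c|\<close> and \<open>P |r|\<close> are bounded by multiples of \<open>\<ell>\<close>. Hence the continuation
  value operator \<open>Q \<phi> = c + \<beta> P (max r \<phi>)\<close> is a contraction of modulus \<open>\<beta> \<kappa> < 1\<close> for the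
  \<open>\<ell>\<close>-weighted supremum norm. By truncation, the Feller property extends to continuous
  integrands dominated by continuous \<open>w\<close> with \<open>P w\<close> continuous; applied with \<open>w = |r| + a \<ell>\<close>
  it shows that \<open>Q\<close> preserves continuity. So the iterates \<open>Q\<^sup>k 0\<close> are continuous, and so is
  their \<open>\<ell>\<close>-weighted uniform limit \<open>\<psi>\<close>, the fixed point of \<open>Q\<close>.

  It remains to identify \<open>v\<^sup>* = max r \<psi>\<close>, which then gives \<open>\<psi>\<^sup>* = \<psi>\<close>. For a stopping time \<open>\<tau>\<close>,
  the expected payoff of stopping at \<open>min \<tau> k\<close> with terminal reward \<open>max r \<psi>\<close> is
  nonincreasing in \<open>k\<close> by the Markov property and \<open>\<psi> = c + \<beta> P (max r \<psi>)\<close>; dominated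
  convergence yields the upper bound. Stopping at the first time with \<open>r \<ge> \<psi>\<close>, but at the
  latest at \<open>N\<close>, attains \<open>max r \<psi>\<close> up to an error of order \<open>(\<beta> \<kappa>)\<^sup>N\<close>.\<close>

lemma sum_atLeastLessThan_Suc_shift_le:
  fixes f :: "nat \<Rightarrow> 'a::canonically_ordered_monoid_add"
  shows "(\<Sum>t\<in>{1..<n}. f (Suc t)) \<le> (\<Sum>t\<in>{1..<n}. f t) + f n"
proof (cases n)
  case (Suc k)
  have "(\<Sum>t\<in>{1..<n}. f (Suc t)) = (\<Sum>t\<in>{Suc 1..<Suc n}. f t)"
    by (rule sum.shift_bounds_Suc_ivl[symmetric])
  also have "\<dots> \<le> (\<Sum>t\<in>{1..<Suc n}. f t)"
    by (rule sum_mono2) auto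
  also have "\<dots> = (\<Sum>t\<in>{1..<n}. f t) + f n"
    using Suc by simp
  finally show ?thesis .
qed simp

lemma sum_lessThan_Suc_shift_le:
  fixes f :: "nat \<Rightarrow> 'a::canonically_ordered_monoid_add"
  shows "(\<Sum>t<n. f (Suc t)) \<le> (\<Sum>t<n. f t) + f n"
proof -
  have "(\<Sum>t<n. f (Suc t)) \<le> f 0 + (\<Sum>t<n. f (Suc t))" by (metis add.commute le_iff_add)
  also have "\<dots> = (\<Sum>t<n. f t) + f n" by (simp only: sum.lessThan_Suc_shift[symmetric] sum.lessThan_Suc)
  finally show ?thesis .
qed

lemma sum_lessThan_if_less:
  fixes f :: "nat \<Rightarrow> 'a::comm_monoid_add"
  assumes "j \<le> k"
  shows "(\<Sum>t<k. if t < j then f t else 0) = (\<Sum>t<j. f t)"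
proof -
  have "{..<k} \<inter> {t. t < j} = {..<j}"
    using assms by auto
  then show ?thesis
    by (simp add: sum.If_cases)
qed

lemma continuous_on_weighted_limit:
  fixes f :: "'a::topological_space \<Rightarrow> real"
  assumes cont: "\<And>k. continuous_on UNIV (f\<^sub>k k)" and cont_w: "continuous_on UNIV w"
    and approx: "\<And>k x. \<bar>f\<^sub>k k x - f x\<bar> \<le> a k * w x" and a_lim: "a \<longlonglongrightarrow> 0"
    and a_nonneg: "\<And>k. a k \<ge> 0"
  shows "continuous_on UNIV f"
  unfolding continuous_on_def
proof (intro ballI tendstoI)
  fix x\<^sub>0 :: 'a and e :: real assume "e > 0"
  have "(\<lambda>k. a k * (\<bar>w x\<^sub>0\<bar> + 1)) \<longlonglongrightarrow> 0 * (\<bar>w x\<^sub>0\<bar> + 1)"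
    by (intro tendsto_mult a_lim tendsto_const)
  then have "\<forall>\<^sub>F k in sequentially. a k * (\<bar>w x\<^sub>0\<bar> + 1) < e / 3"
    by (rule order_tendstoD(2)) (use \<open>e > 0\<close> in simp)
  then obtain k where k: "a k * (\<bar>w x\<^sub>0\<bar> + 1) < e / 3"
    by (meson eventually_sequentially order_refl)
  have "\<forall>\<^sub>F x in at x\<^sub>0. dist (f\<^sub>k k x) (f\<^sub>k k x\<^sub>0) < e / 3"
    using cont[of k] \<open>e > 0\<close> by (auto simp: continuous_on_def dest!: tendstoD[where e="e/3"])
  moreover have "((\<lambda>x. \<bar>w x\<bar>) \<longlongrightarrow> \<bar>w x\<^sub>0\<bar>) (at x\<^sub>0)"
    using cont_w by (intro tendsto_rabs) (simp add: continuous_on_def)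
  then have "\<forall>\<^sub>F x in at x\<^sub>0. \<bar>w x\<bar> < \<bar>w x\<^sub>0\<bar> + 1"
    by (rule order_tendstoD(2)) simp
  ultimately show "\<forall>\<^sub>F x in at x\<^sub>0 within UNIV. dist (f x) (f x\<^sub>0) < e"
  proof eventually_elim
    case (elim x)
    have "a k * w x \<le> a k * (\<bar>w x\<^sub>0\<bar> + 1)" "a k * w x\<^sub>0 \<le> a k * (\<bar>w x\<^sub>0\<bar> + 1)"
      using elim(2) a_nonneg[of k] by (auto intro!: mult_left_mono)
    moreover have "\<bar>f x - f x\<^sub>0\<bar> \<le> \<bar>f\<^sub>k k x - f x\<bar> + \<bar>f\<^sub>k k x - f\<^sub>k k x\<^sub>0\<bar> + \<bar>f\<^sub>k k x\<^sub>0 - f x\<^sub>0\<bar>"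
      by linarith
    ultimately show ?case
      using approx[of k x] approx[of k x\<^sub>0] elim(1) k by (simp add: dist_real_def)
  qed
qed

lemma geometric_increments_limit:
  fixes s :: "nat \<Rightarrow> real"
  assumes increments: "\<And>k. \<bar>s (Suc k) - s k\<bar> \<le> B * q ^ k" and q: "0 \<le> q" "q < 1"
  shows "s \<longlonglongrightarrow> lim s" "\<And>k. \<bar>lim s - s k\<bar> \<le> B * q ^ k / (1 - q)"
proof -
  define D where "D j = s (Suc j) - s j" for j
  have "summable (\<lambda>j. B * q ^ j)"
    using q by (intro summable_mult summable_geometric) auto
  then have summable_D: "summable D"
    by (rule summable_comparison_test[rotated]) (use increments in \<open>auto simp: D_def\<close>)
  have telescope: "s k = s 0 + (\<Sum>j<k. D j)" for k
    by (simp add: D_def sum_lessThan_telescope)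
  have "(\<lambda>k. s 0 + (\<Sum>j<k. D j)) \<longlonglongrightarrow> s 0 + suminf D"
    by (intro tendsto_add tendsto_const summable_LIMSEQ summable_D)
  then have "s \<longlonglongrightarrow> s 0 + suminf D"
    by (simp add: telescope[symmetric])
  then have lim_eq: "lim s = s 0 + suminf D"
    by (rule limI)
  with \<open>s \<longlonglongrightarrow> s 0 + suminf D\<close> show "s \<longlonglongrightarrow> lim s" by simp
  fix k
  have "lim s - s k = (\<Sum>j. D (j + k))"
    using suminf_split_initial_segment[OF summable_D, of k] by (simp add: lim_eq telescope[of k])
  also have "\<bar>\<dots>\<bar> \<le> (\<Sum>j. B * q ^ k * q ^ j)"
    using increments q
    by (intro norm_suminf_le[of "\<lambda>j. D (j + k)", simplified] summable_mult summable_geometric)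
      (use increments[of "_ + k"] in \<open>auto simp: D_def power_add mult_ac\<close>)
  also have "\<dots> = B * q ^ k / (1 - q)"
    using q by (simp add: suminf_mult suminf_geometric divide_simps)
  finally show "\<bar>lim s - s k\<bar> \<le> B * q ^ k / (1 - q)" .
qed

section \<open>Powers of a Markov kernel and Markov chains\<close>

locale markov_kernel =
  fixes P :: "'z::topological_space \<Rightarrow> 'z measure"
  assumes kernel: "P \<in> borel \<rightarrow>\<^sub>M prob_algebra borel"
begin

lemma measurable_P_subprob[measurable]: "P \<in> borel \<rightarrow>\<^sub>M subprob_algebra borel"
  using kernel by (rule measurable_prob_algebraD)

lemma sets_P[simp, measurable_cong]: "sets (P y) = sets borel"
  using measurable_space[OF kernel, of y] by (simp add: space_prob_algebra)

lemma space_P[simp]: "space (P y) = UNIV"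
  using sets_eq_imp_space_eq[OF sets_P] by simp

lemma measurable_P_eq[simp]: "P y \<rightarrow>\<^sub>M N = borel \<rightarrow>\<^sub>M N"
  by (rule measurable_cong_sets) auto

lemma prob_space_P: "prob_space (P y)"
  using measurable_space[OF kernel, of y] by (simp add: space_prob_algebra)

lemma emeasure_P: "emeasure (P y) B = ennreal (measure (P y) B)"
proof -
  interpret prob_space "P y" by (rule prob_space_P)
  show ?thesis by (rule emeasure_eq_measure)
qed

lemma kpow_measurable: "kpow P t \<in> borel \<rightarrow>\<^sub>M prob_algebra borel"
proof (induction t)
  case 0
  then show ?case using measurable_return_prob_space by (simp add: kpow.simps(1)[abs_def])
next
  case (Suc t)
  then show ?case using measurable_bind_prob_space[OF Suc kernel] by simp
qed

lemma kpow_measurable_subprob[measurable]: "kpow P t \<in> borel \<rightarrow>\<^sub>M subprob_algebra borel"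
  using kpow_measurable by (rule measurable_prob_algebraD)

lemma sets_kpow[simp, measurable_cong]: "sets (kpow P t y) = sets borel"
  using measurable_space[OF kpow_measurable, of y] by (simp add: space_prob_algebra)

lemma space_kpow[simp]: "space (kpow P t y) = UNIV"
  using sets_eq_imp_space_eq[OF sets_kpow] by simp

lemma measurable_kpow_eq[simp]: "kpow P t y \<rightarrow>\<^sub>M N = borel \<rightarrow>\<^sub>M N"
  by (rule measurable_cong_sets) auto

lemma return_bind_P[simp]: "return borel y \<bind> P = P y"
  using bind_return[OF measurable_P_subprob, of y] by simp

lemma nn_integral_kpow_Suc:
  assumes "h \<in> borel_measurable borel"
  shows "(\<integral>\<^sup>+x. h x \<partial>kpow P (Suc t) y) = (\<integral>\<^sup>+x. (\<integral>\<^sup>+u. h u \<partial>P x) \<partial>kpow P t y)"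
proof -
  have "P \<in> kpow P t y \<rightarrow>\<^sub>M subprob_algebra borel"
    by simp
  with assms show ?thesis
    by (simp add: nn_integral_bind[where B=borel])
qed

lemma nn_integral_kpow_add:
  assumes "h \<in> borel_measurable borel"
  shows "(\<integral>\<^sup>+x. h x \<partial>kpow P (a + b) y) = (\<integral>\<^sup>+x. (\<integral>\<^sup>+u. h u \<partial>kpow P a x) \<partial>kpow P b y)"
  using assms
proof (induction a arbitrary: h)
  case 0
  then show ?case by (simp add: nn_integral_return)
next
  case (Suc a)
  have [measurable]: "h \<in> borel_measurable borel" by (fact Suc.prems)
  have "(\<integral>\<^sup>+x. h x \<partial>kpow P (Suc (a + b)) y) = (\<integral>\<^sup>+x. (\<integral>\<^sup>+u. h u \<partial>P x) \<partial>kpow P (a + b) y)"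
    by (rule nn_integral_kpow_Suc) measurable
  also have "\<dots> = (\<integral>\<^sup>+x. (\<integral>\<^sup>+u. (\<integral>\<^sup>+v. h v \<partial>P u) \<partial>kpow P a x) \<partial>kpow P b y)"
    by (rule Suc.IH) measurable
  also have "\<dots> = (\<integral>\<^sup>+x. (\<integral>\<^sup>+u. h u \<partial>kpow P (Suc a) x) \<partial>kpow P b y)"
    by (intro nn_integral_cong nn_integral_kpow_Suc[symmetric]) measurable
  finally show ?case by simp
qed

lemma nn_integral_kpow_Suc_first:
  "h \<in> borel_measurable borel \<Longrightarrow>
   (\<integral>\<^sup>+x. h x \<partial>kpow P (Suc t) y) = (\<integral>\<^sup>+x. (\<integral>\<^sup>+u. h u \<partial>kpow P t x) \<partial>P y)"
  using nn_integral_kpow_add[of h t "Suc 0" y] by simp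

lemma integral_bind_kernel_nonneg:
  fixes f :: "'z \<Rightarrow> real"
  assumes L: "sets L = sets borel"
    and f[measurable]: "f \<in> borel_measurable borel" and nonneg: "\<And>x. 0 \<le> f x"
    and finite: "(\<integral>\<^sup>+x. f x \<partial>(L \<bind> P)) < \<infinity>"
  shows "integrable (L \<bind> P) f" "integrable L (\<lambda>y. \<integral>x. f x \<partial>P y)"
    "(\<integral>x. f x \<partial>(L \<bind> P)) = (\<integral>y. (\<integral>x. f x \<partial>P y) \<partial>L)"
    "AE y in L. integrable (P y) f"
proof -
  have [measurable]: "P \<in> L \<rightarrow>\<^sub>M subprob_algebra borel"
    unfolding measurable_cong_sets[OF L refl] by (rule measurable_P_subprob)
  have [measurable_cong]: "sets (L \<bind> P) = sets borel"
    by (rule sets_bind[where N=borel]) (auto simp: sets_eq_imp_space_eq[OF L])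
  have nn_bind: "(\<integral>\<^sup>+x. f x \<partial>(L \<bind> P)) = (\<integral>\<^sup>+y. (\<integral>\<^sup>+x. f x \<partial>P y) \<partial>L)"
    by (rule nn_integral_bind) measurable
  show int_bind: "integrable (L \<bind> P) f"
    using nonneg finite by (intro integrableI_nonneg) auto
  have "AE y in L. (\<integral>\<^sup>+x. f x \<partial>P y) \<noteq> \<infinity>"
    by (rule nn_integral_PInf_AE) (use finite nn_bind in auto)
  then have AE_int: "AE y in L. integrable (P y) f"
    by eventually_elim (intro integrableI_nonneg, auto simp: nonneg top.not_eq_extremum)
  then show "AE y in L. integrable (P y) f" .
  have nn_eq: "(\<integral>\<^sup>+y. ennreal (\<integral>x. f x \<partial>P y) \<partial>L) = (\<integral>\<^sup>+x. f x \<partial>(L \<bind> P))"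
    unfolding nn_bind using AE_int
    by (intro nn_integral_cong_AE, eventually_elim) (simp add: nn_integral_eq_integral nonneg)
  show int_L: "integrable L (\<lambda>y. \<integral>x. f x \<partial>P y)"
    using finite nn_eq nonneg by (intro integrableI_nonneg) (auto intro!: integral_nonneg)
  have "ennreal (\<integral>x. f x \<partial>(L \<bind> P)) = ennreal (\<integral>y. (\<integral>x. f x \<partial>P y) \<partial>L)"
    using int_bind int_L nn_eq nonneg
    by (simp add: nn_integral_eq_integral[symmetric] integral_nonneg)
  then show "(\<integral>x. f x \<partial>(L \<bind> P)) = (\<integral>y. (\<integral>x. f x \<partial>P y) \<partial>L)"
    using nonneg by (simp add: integral_nonneg)
qed

lemma integral_bind_kernel:
  fixes f :: "'z \<Rightarrow> real"
  assumes L: "sets L = sets borel"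
    and f[measurable]: "f \<in> borel_measurable borel"
    and finite: "(\<integral>\<^sup>+x. ennreal \<bar>f x\<bar> \<partial>(L \<bind> P)) < \<infinity>"
  shows "integrable L (\<lambda>y. \<integral>x. f x \<partial>P y)"
    "(\<integral>x. f x \<partial>(L \<bind> P)) = (\<integral>y. (\<integral>x. f x \<partial>P y) \<partial>L)"
proof -
  have measurable_L: "L \<rightarrow>\<^sub>M N = borel \<rightarrow>\<^sub>M N" for N
    by (rule measurable_cong_sets) (auto simp: L)
  define f\<^sub>p where "f\<^sub>p x = max (f x) 0" for x
  define f\<^sub>n where "f\<^sub>n x = max (- f x) 0" for x
  have meas[measurable]: "f\<^sub>p \<in> borel_measurable borel" "f\<^sub>n \<in> borel_measurable borel"
    unfolding f\<^sub>p_def f\<^sub>n_def by measurable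
  have nonneg: "0 \<le> f\<^sub>p x" "0 \<le> f\<^sub>n x" for x
    by (auto simp: f\<^sub>p_def f\<^sub>n_def)
  have f_split: "f x = f\<^sub>p x - f\<^sub>n x" for x
    by (auto simp: f\<^sub>p_def f\<^sub>n_def)
  have "(\<integral>\<^sup>+x. f\<^sub>p x \<partial>(L \<bind> P)) < \<infinity>"
    by (rule le_less_trans[OF nn_integral_mono finite]) (auto simp: f\<^sub>p_def)
  note pos = integral_bind_kernel_nonneg[OF L meas(1) nonneg(1) this]
  have "(\<integral>\<^sup>+x. f\<^sub>n x \<partial>(L \<bind> P)) < \<infinity>"
    by (rule le_less_trans[OF nn_integral_mono finite]) (auto simp: f\<^sub>n_def)
  note neg = integral_bind_kernel_nonneg[OF L meas(2) nonneg(2) this]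
  have AE_split: "AE y in L. (\<integral>x. f x \<partial>P y) = (\<integral>x. f\<^sub>p x \<partial>P y) - (\<integral>x. f\<^sub>n x \<partial>P y)"
    using pos(4) neg(4) by eventually_elim (simp add: f_split[abs_def] Bochner_Integration.integral_diff)
  show "integrable L (\<lambda>y. \<integral>x. f x \<partial>P y)"
    by (rule integrable_cong_AE_imp[OF Bochner_Integration.integrable_diff[OF pos(2) neg(2)]])
      (use AE_split in \<open>auto simp: measurable_L\<close>)
  have "(\<integral>x. f x \<partial>(L \<bind> P)) = (\<integral>y. (\<integral>x. f\<^sub>p x \<partial>P y) - (\<integral>x. f\<^sub>n x \<partial>P y) \<partial>L)"
    using pos neg by (simp add: f_split[abs_def] Bochner_Integration.integral_diff)
  also have "\<dots> = (\<integral>y. (\<integral>x. f x \<partial>P y) \<partial>L)"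
    by (rule integral_cong_AE) (use AE_split in \<open>auto simp: measurable_L\<close>)
  finally show "(\<integral>x. f x \<partial>(L \<bind> P)) = (\<integral>y. (\<integral>x. f x \<partial>P y) \<partial>L)" .
qed

end

locale markov_chain = markov_kernel P for P :: "'z::topological_space \<Rightarrow> 'z measure" +
  fixes z :: 'z and M :: "'w measure" and F :: "nat \<Rightarrow> 'w measure" and X :: "nat \<Rightarrow> 'w \<Rightarrow> 'z"
  assumes process: "markov_process P z M F X"
begin

sublocale M: prob_space M
  using process by (simp add: markov_process_def)

lemma subalgebra_F: "subalgebra M (F t)"
  using process by (auto simp: markov_process_def subalgebra_def)

lemma sets_F_mono: "s \<le> t \<Longrightarrow> sets (F s) \<subseteq> sets (F t)"
  using process by (auto simp: markov_process_def)

lemma space_F[simp]: "space (F t) = space M"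
  using process by (auto simp: markov_process_def)

lemma sets_F_subset: "A \<in> sets (F t) \<Longrightarrow> A \<in> sets M"
  using subalgebra_F by (auto simp: subalgebra_def)

lemma X_measurable_F:
  assumes "j \<le> t"
  shows "X j \<in> F t \<rightarrow>\<^sub>M borel"
proof -
  have "X j \<in> F j \<rightarrow>\<^sub>M borel"
    using process by (simp add: markov_process_def)
  then show ?thesis
    by (rule measurable_from_subalg[rotated]) (use assms in \<open>auto simp: subalgebra_def sets_F_mono\<close>)
qed

lemma X_measurable[measurable]: "X t \<in> M \<rightarrow>\<^sub>M borel"
  by (rule measurable_from_subalg[OF subalgebra_F X_measurable_F[OF order_refl]])

lemma pred_F_imp_M: "Measurable.pred (F t) Q \<Longrightarrow> Measurable.pred M Q"
  by (rule measurable_from_subalg[OF subalgebra_F])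

lemma AE_X_0: "AE \<omega> in M. X 0 \<omega> = z"
  using process by (auto simp: markov_process_def)

lemma distr_X_Suc_restrict:
  assumes A: "A \<in> sets (F t)"
  shows "distr (density M (indicator A)) borel (X (Suc t))
       = distr (density M (indicator A)) borel (X t) \<bind> P"
    (is "?L = ?R")
proof (rule measure_eqI)
  have [measurable]: "A \<in> sets M" using sets_F_subset[OF A] .
  have kernel_L: "P \<in> distr (density M (indicator A)) borel (X t) \<rightarrow>\<^sub>M subprob_algebra borel"
    by (subst measurable_cong_sets[of _ borel]) auto
  show "sets ?L = sets ?R"
    by (subst sets_bind[where N=borel]) auto
  fix B assume "B \<in> sets ?L"
  then have B[measurable]: "B \<in> sets borel" by simp
  have integrable_P_B: "integrable M (\<lambda>\<omega>. indicator A \<omega> * measure (P (X t \<omega>)) B)"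
    by (rule M.integrable_const_bound[where B=1])
      (auto simp: indicator_def intro!: prob_space.prob_le_1[OF prob_space_P])
  have "emeasure ?L B = emeasure (density M (indicator A)) (X (Suc t) -` B \<inter> space M)"
    by (subst emeasure_distr) auto
  also have "\<dots> = (\<integral>\<^sup>+\<omega>. indicator (A \<inter> {\<omega>\<in>space M. X (Suc t) \<omega> \<in> B}) \<omega> \<partial>M)"
    by (subst emeasure_density)
      (auto intro!: nn_integral_cong simp: indicator_def simp del: nn_integral_indicator)
  also have "\<dots> = emeasure M (A \<inter> {\<omega>\<in>space M. X (Suc t) \<omega> \<in> B})"
    by (rule nn_integral_indicator) measurable
  also have "\<dots> = ennreal (\<integral>\<omega>. indicator A \<omega> * measure (P (X t \<omega>)) B \<partial>M)"
    using process A B by (simp add: M.emeasure_eq_measure markov_process_def)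
  also have "\<dots> = (\<integral>\<^sup>+\<omega>. ennreal (indicator A \<omega> * measure (P (X t \<omega>)) B) \<partial>M)"
    using integrable_P_B by (simp add: nn_integral_eq_integral)
  also have "\<dots> = (\<integral>\<^sup>+\<omega>. indicator A \<omega> * emeasure (P (X t \<omega>)) B \<partial>M)"
    by (intro nn_integral_cong)
      (simp add: indicator_def emeasure_P)
  also have "\<dots> = emeasure ?R B"
    by (simp add: emeasure_bind[OF _ kernel_L B] nn_integral_distr nn_integral_density)
  finally show "emeasure ?L B = emeasure ?R B" .
qed

lemma distr_X_eq_kpow: "distr M borel (X t) = kpow P t z"
proof (induction t)
  case 0
  show ?case
  proof (rule measure_eqI)
    fix B assume "B \<in> sets (distr M borel (X 0))"
    then have [measurable]: "B \<in> sets borel" by simp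
    have "emeasure M (X 0 -` B \<inter> space M) = emeasure M (if z \<in> B then space M else {})"
      by (rule emeasure_eq_AE) (use AE_X_0 in \<open>auto elim!: eventually_mono\<close>)
    then show "emeasure (distr M borel (X 0)) B = emeasure (kpow P 0 z) B"
      by (simp add: emeasure_distr M.emeasure_space_1)
  qed simp
next
  case (Suc t)
  have "density M (indicator (space M)) = density M (\<lambda>_. 1)"
    by (rule density_cong) (auto simp: indicator_def)
  with distr_X_Suc_restrict[of "space M" t] Suc show ?case
    by (simp add: density_1 sets.top[of "F t", simplified])
qed

lemma nn_integral_X:
  "h \<in> borel_measurable borel \<Longrightarrow> (\<integral>\<^sup>+\<omega>. h (X t \<omega>) \<partial>M) = (\<integral>\<^sup>+x. h x \<partial>kpow P t z)"
  by (simp add: distr_X_eq_kpow[symmetric] nn_integral_distr)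

lemma integral_X:
  fixes h :: "'z \<Rightarrow> real"
  shows "h \<in> borel_measurable borel \<Longrightarrow> (\<integral>\<omega>. h (X t \<omega>) \<partial>M) = (\<integral>x. h x \<partial>kpow P t z)"
  by (simp add: distr_X_eq_kpow[symmetric] integral_distr)

lemma integrable_X_iff:
  fixes h :: "'z \<Rightarrow> real"
  shows "h \<in> borel_measurable borel \<Longrightarrow> integrable M (\<lambda>\<omega>. h (X t \<omega>)) \<longleftrightarrow> integrable (kpow P t z) h"
  by (simp add: distr_X_eq_kpow[symmetric] integrable_distr_eq)

lemma integrable_X:
  fixes h :: "'z \<Rightarrow> real"
  assumes [measurable]: "h \<in> borel_measurable borel"
    and finite: "(\<integral>\<^sup>+x. ennreal \<bar>h x\<bar> \<partial>kpow P t z) < \<infinity>"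
  shows "integrable M (\<lambda>\<omega>. h (X t \<omega>))"
  unfolding integrable_X_iff[OF assms(1)] using finite by (intro integrableI_bounded) auto

lemma integrable_X_if:
  fixes h :: "'z \<Rightarrow> real"
  assumes [measurable]: "h \<in> borel_measurable borel"
    and finite: "(\<integral>\<^sup>+x. ennreal \<bar>h x\<bar> \<partial>kpow P t z) < \<infinity>"
    and [measurable]: "Measurable.pred M Q"
  shows "integrable M (\<lambda>\<omega>. if Q \<omega> then h (X t \<omega>) else 0)"
  by (rule Bochner_Integration.integrable_bound[OF integrable_X[OF assms(1,2)]]) auto

lemma integral_X_Suc_restrict:
  fixes h :: "'z \<Rightarrow> real"
  assumes A: "A \<in> sets (F t)" and [measurable]: "h \<in> borel_measurable borel"
    and finite: "(\<integral>\<^sup>+x. ennreal \<bar>h x\<bar> \<partial>kpow P (Suc t) z) < \<infinity>"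
  shows "integrable M (\<lambda>\<omega>. indicator A \<omega> * (\<integral>x. h x \<partial>P (X t \<omega>)))"
    "(\<integral>\<omega>. indicator A \<omega> * h (X (Suc t) \<omega>) \<partial>M) = (\<integral>\<omega>. indicator A \<omega> * (\<integral>x. h x \<partial>P (X t \<omega>)) \<partial>M)"
proof -
  have [measurable]: "A \<in> sets M" using sets_F_subset[OF A] .
  let ?N = "density M (indicator A)"
  let ?L = "distr ?N borel (X t)"
  have restrict_eq: "?N = density M (\<lambda>\<omega>. ennreal (indicator A \<omega>))"
    by (intro arg_cong[where f="density M"]) (auto simp: fun_eq_iff indicator_def)
  have "(\<integral>\<^sup>+x. ennreal \<bar>h x\<bar> \<partial>(?L \<bind> P)) = (\<integral>\<^sup>+x. ennreal \<bar>h x\<bar> \<partial>distr ?N borel (X (Suc t)))"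
    by (simp add: distr_X_Suc_restrict[OF A])
  also have "\<dots> = (\<integral>\<^sup>+\<omega>. indicator A \<omega> * ennreal \<bar>h (X (Suc t) \<omega>)\<bar> \<partial>M)"
    by (simp add: nn_integral_distr nn_integral_density)
  also have "\<dots> \<le> (\<integral>\<^sup>+\<omega>. ennreal \<bar>h (X (Suc t) \<omega>)\<bar> \<partial>M)"
    by (rule nn_integral_mono) (auto simp: indicator_def)
  also have "\<dots> < \<infinity>"
    using finite by (subst nn_integral_X) auto
  finally have "(\<integral>\<^sup>+x. ennreal \<bar>h x\<bar> \<partial>(?L \<bind> P)) < \<infinity>" .
  note bind = integral_bind_kernel[of ?L, OF _ _ this]
  show "integrable M (\<lambda>\<omega>. indicator A \<omega> * (\<integral>x. h x \<partial>P (X t \<omega>)))"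
    using bind(1) by (simp add: restrict_eq integrable_distr_eq integrable_density)
  have "(\<integral>\<omega>. indicator A \<omega> * h (X (Suc t) \<omega>) \<partial>M) = (\<integral>x. h x \<partial>distr ?N borel (X (Suc t)))"
    by (simp add: restrict_eq integral_distr integral_density)
  also have "\<dots> = (\<integral>\<omega>. indicator A \<omega> * (\<integral>x. h x \<partial>P (X t \<omega>)) \<partial>M)"
    using distr_X_Suc_restrict[OF A] bind(2)
    by (simp add: restrict_eq integral_distr integral_density)
  finally show "(\<integral>\<omega>. indicator A \<omega> * h (X (Suc t) \<omega>) \<partial>M) = (\<integral>\<omega>. indicator A \<omega> * (\<integral>x. h x \<partial>P (X t \<omega>)) \<partial>M)" .
qed

end

section \<open>Feller kernels\<close>

locale feller_kernel = markov_kernel P for P :: "'z::topological_space \<Rightarrow> 'z measure" +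
  assumes feller: "\<And>h :: 'z \<Rightarrow> real. continuous_on UNIV h \<Longrightarrow> bounded (range h) \<Longrightarrow>
    continuous_on UNIV (\<lambda>z. \<integral>z'. h z' \<partial>P z) \<and> bounded (range (\<lambda>z. \<integral>z'. h z' \<partial>P z))"
begin

text \<open>Truncations of a nonnegative continuous function are bounded and continuous, so their
  integrals are continuous by the Feller property; by monotone convergence the integral itself is
  their supremum and hence lower semicontinuous.\<close>
lemma eventually_less_integral_nonneg:
  fixes u :: "'z \<Rightarrow> real"
  assumes cont: "continuous_on UNIV u" and nonneg: "\<And>x. u x \<ge> 0"
    and int: "\<And>z. integrable (P z) u" and less: "l < (\<integral>x. u x \<partial>P z\<^sub>0)"
  shows "\<forall>\<^sub>F z in at z\<^sub>0. l < (\<integral>x. u x \<partial>P z)"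
proof -
  have [measurable]: "u \<in> borel_measurable borel"
    by (rule borel_measurable_continuous_onI[OF cont])
  define u\<^sub>k where "u\<^sub>k k x = min (u x) (real k)" for k x
  have [measurable]: "u\<^sub>k k \<in> borel_measurable borel" for k
    unfolding u\<^sub>k_def by measurable
  have int_u\<^sub>k: "integrable (P z) (u\<^sub>k k)" for z k
    by (rule Bochner_Integration.integrable_bound[OF int[of z]]) (auto simp: u\<^sub>k_def nonneg)
  have "\<forall>\<^sub>F k in sequentially. u\<^sub>k k x = u x" for x
    using eventually_ge_at_top[of "nat \<lceil>u x\<rceil>"]
    by eventually_elim (use real_nat_ceiling_ge[of "u x"] in \<open>auto simp: u\<^sub>k_def\<close>)
  then have "(\<lambda>k. \<integral>x. u\<^sub>k k x \<partial>P z\<^sub>0) \<longlonglongrightarrow> (\<integral>x. u x \<partial>P z\<^sub>0)"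
    using nonneg
    by (intro integral_dominated_convergence[where w=u] int AE_I2 tendsto_eventually)
      (auto simp: u\<^sub>k_def)
  then have "\<forall>\<^sub>F k in sequentially. l < (\<integral>x. u\<^sub>k k x \<partial>P z\<^sub>0)"
    using less by (rule order_tendstoD(1))
  then obtain k where k: "l < (\<integral>x. u\<^sub>k k x \<partial>P z\<^sub>0)"
    by (meson eventually_sequentially order_refl)
  have "continuous_on UNIV (u\<^sub>k k)" "bounded (range (u\<^sub>k k))"
    using nonneg unfolding bounded_real u\<^sub>k_def
    by (auto intro!: continuous_on_min cont exI[of _ "real k"])
  then have "((\<lambda>z. \<integral>x. u\<^sub>k k x \<partial>P z) \<longlongrightarrow> (\<integral>x. u\<^sub>k k x \<partial>P z\<^sub>0)) (at z\<^sub>0)"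
    using feller by (simp add: continuous_on_def)
  then have "\<forall>\<^sub>F z in at z\<^sub>0. l < (\<integral>x. u\<^sub>k k x \<partial>P z)"
    using k by (rule order_tendstoD(1))
  moreover have "(\<integral>x. u\<^sub>k k x \<partial>P z) \<le> (\<integral>x. u x \<partial>P z)" for z
    by (rule integral_mono[OF int_u\<^sub>k int]) (simp add: u\<^sub>k_def)
  ultimately show ?thesis
    by (elim eventually_mono) (meson less_le_trans)
qed

text \<open>Applying lower semicontinuity to \<open>w \<plusminus> h\<close> and subtracting the continuous
  \<open>\<integral>w\<close> gives both semicontinuities of \<open>\<integral>h\<close>.\<close>
lemma continuous_on_integral_dominated:
  fixes h w :: "'z \<Rightarrow> real"
  assumes cont_h: "continuous_on UNIV h" and cont_w: "continuous_on UNIV w"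
    and dominated: "\<And>x. \<bar>h x\<bar> \<le> w x" and int_w: "\<And>z. integrable (P z) w"
    and cont_int_w: "continuous_on UNIV (\<lambda>z. \<integral>x. w x \<partial>P z)"
  shows "continuous_on UNIV (\<lambda>z. \<integral>x. h x \<partial>P z)"
  unfolding continuous_on_def
proof (intro ballI)
  fix z\<^sub>0 :: 'z
  have [measurable]: "h \<in> borel_measurable borel"
    using cont_h by (rule borel_measurable_continuous_onI)
  have int_h: "integrable (P z) h" for z
    by (rule Bochner_Integration.integrable_bound[OF int_w])
      (auto intro: order_trans[OF dominated abs_ge_self])
  have lower: "\<forall>\<^sub>F z in at z\<^sub>0. s * (\<integral>x. h x \<partial>P z\<^sub>0) - e < s * (\<integral>x. h x \<partial>P z)"
    if "e > 0" "\<bar>s\<bar> = 1" for s e :: real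
  proof -
    have "\<bar>s * h x\<bar> \<le> w x" for x
      using dominated[of x] that(2) by (simp add: abs_mult)
    then have nonneg: "0 \<le> w x + s * h x" for x
      by (smt (verit))
    have eq: "(\<integral>x. w x + s * h x \<partial>P z) = (\<integral>x. w x \<partial>P z) + s * (\<integral>x. h x \<partial>P z)" for z
      using int_w int_h by simp
    have "\<forall>\<^sub>F z in at z\<^sub>0. (\<integral>x. w x + s * h x \<partial>P z\<^sub>0) - e / 2 < (\<integral>x. w x + s * h x \<partial>P z)"
      using that int_w int_h nonneg
      by (intro eventually_less_integral_nonneg continuous_intros cont_h cont_w) auto
    moreover have "\<forall>\<^sub>F z in at z\<^sub>0. (\<integral>x. w x \<partial>P z) < (\<integral>x. w x \<partial>P z\<^sub>0) + e / 2"
      using cont_int_w that by (auto simp: continuous_on_def intro: order_tendstoD(2))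
    ultimately show ?thesis
      by eventually_elim (simp add: eq)
  qed
  show "((\<lambda>z. \<integral>x. h x \<partial>P z) \<longlongrightarrow> (\<integral>x. h x \<partial>P z\<^sub>0)) (at z\<^sub>0 within UNIV)"
  proof (rule order_tendstoI)
    fix l assume "l < (\<integral>x. h x \<partial>P z\<^sub>0)"
    then show "\<forall>\<^sub>F z in at z\<^sub>0 within UNIV. l < (\<integral>x. h x \<partial>P z)"
      using lower[of "(\<integral>x. h x \<partial>P z\<^sub>0) - l" 1] by simp
  next
    fix u assume "(\<integral>x. h x \<partial>P z\<^sub>0) < u"
    then show "\<forall>\<^sub>F z in at z\<^sub>0 within UNIV. (\<integral>x. h x \<partial>P z) < u"
      using lower[of "u - (\<integral>x. h x \<partial>P z\<^sub>0)" "-1"] by simp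
  qed
qed

end

section \<open>The weight function\<close>

locale weighted_kernel = markov_kernel P for P :: "'z::topological_space \<Rightarrow> 'z measure" +
  fixes r c g :: "'z \<Rightarrow> real" and m d m' d' :: real and n :: nat
  assumes r_measurable[measurable]: "r \<in> borel_measurable borel"
    and c_measurable[measurable]: "c \<in> borel_measurable borel"
    and g_measurable[measurable]: "g \<in> borel_measurable borel" and g_nonneg: "\<And>z. g z \<ge> 0"
    and m_nonneg: "m \<ge> 0" and d_nonneg: "d \<ge> 0"
    and r_le_g: "\<And>z. (\<integral>\<^sup>+ z'. ennreal \<bar>r z'\<bar> \<partial>kpow P n z) \<le> ennreal (g z)"
    and c_le_g: "\<And>z. (\<integral>\<^sup>+ z'. ennreal \<bar>c z'\<bar> \<partial>kpow P n z) \<le> ennreal (g z)"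
    and g_drift: "\<And>z. (\<integral>\<^sup>+ z'. ennreal (g z') \<partial>P z) \<le> ennreal (m * g z + d)"
    and integrable_r: "\<And>z t. t < n \<Longrightarrow> integrable (kpow P t z) r"
    and integrable_c: "\<And>z t. t < n \<Longrightarrow> integrable (kpow P t z) c"
    and m'_pos: "m' > 0" and d'_pos: "d' > 0" and m_m'_gt_1: "m + 2 * m' > 1"
    and d'_ge: "d' \<ge> d / (m + 2 * m' - 1)"
begin

abbreviation L where "L \<equiv> ell P r c g n m' d'"

definition \<kappa> where "\<kappa> = m + 2 * m'"

lemma kappa_gt_1: "\<kappa> > 1" and d_le_d'_kappa: "d \<le> d' * (\<kappa> - 1)"
proof -
  show "\<kappa> > 1" using m_m'_gt_1 by (simp add: \<kappa>_def)
  then show "d \<le> d' * (\<kappa> - 1)"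
    using d'_ge by (simp add: \<kappa>_def field_simps)
qed

definition moment_sum :: "'z \<Rightarrow> real" where
  "moment_sum y = (\<Sum>t\<in>{1..<n}. \<integral>x. \<bar>r x\<bar> \<partial>kpow P t y) + (\<Sum>t<n. \<integral>x. \<bar>c x\<bar> \<partial>kpow P t y)"

lemma moment_sum_nonneg: "moment_sum y \<ge> 0"
  unfolding moment_sum_def by (intro add_nonneg_nonneg sum_nonneg integral_nonneg) auto

lemma ell_eq: "L y = m' * moment_sum y + g y + d'"
  by (simp add: ell_def moment_sum_def)

lemma ell_ge: "L y \<ge> g y + d'"
  using m'_pos moment_sum_nonneg[of y] by (simp add: ell_eq)

lemma ell_pos: "L y > 0"
  using ell_ge[of y] g_nonneg[of y] d'_pos by linarith

lemma ell_measurable[measurable]: "L \<in> borel_measurable borel"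
  unfolding ell_def by measurable

lemma ennreal_moment_sum:
  "ennreal (moment_sum y) = (\<Sum>t\<in>{1..<n}. \<integral>\<^sup>+x. \<bar>r x\<bar> \<partial>kpow P t y) + (\<Sum>t<n. \<integral>\<^sup>+x. \<bar>c x\<bar> \<partial>kpow P t y)"
proof -
  have r: "ennreal (\<integral>x. \<bar>r x\<bar> \<partial>kpow P t y) = (\<integral>\<^sup>+x. \<bar>r x\<bar> \<partial>kpow P t y)" if "t < n" for t
    using integrable_r[OF that] by (simp add: nn_integral_eq_integral)
  have c: "ennreal (\<integral>x. \<bar>c x\<bar> \<partial>kpow P t y) = (\<integral>\<^sup>+x. \<bar>c x\<bar> \<partial>kpow P t y)" if "t < n" for t
    using integrable_c[OF that] by (simp add: nn_integral_eq_integral)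
  have "ennreal (moment_sum y) = ennreal (\<Sum>t\<in>{1..<n}. \<integral>x. \<bar>r x\<bar> \<partial>kpow P t y) + ennreal (\<Sum>t<n. \<integral>x. \<bar>c x\<bar> \<partial>kpow P t y)"
    unfolding moment_sum_def by (intro ennreal_plus sum_nonneg integral_nonneg) auto
  also have "\<dots> = (\<Sum>t\<in>{1..<n}. ennreal (\<integral>x. \<bar>r x\<bar> \<partial>kpow P t y)) + (\<Sum>t<n. ennreal (\<integral>x. \<bar>c x\<bar> \<partial>kpow P t y))"
    by (simp add: sum_ennreal integral_nonneg)
  also have "\<dots> = (\<Sum>t\<in>{1..<n}. \<integral>\<^sup>+x. \<bar>r x\<bar> \<partial>kpow P t y) + (\<Sum>t<n. \<integral>\<^sup>+x. \<bar>c x\<bar> \<partial>kpow P t y)"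
    using r c by (intro arg_cong2[where f="(+)"] sum.cong) auto
  finally show ?thesis .
qed

lemma ennreal_ell: "ennreal (L x) = ennreal m' * ennreal (moment_sum x) + ennreal (g x) + ennreal d'"
  using m'_pos d'_pos moment_sum_nonneg[of x] g_nonneg[of x]
  by (simp add: ell_eq ennreal_plus[symmetric] ennreal_mult[symmetric] del: ennreal_plus)

text \<open>The weight is designed for this drift inequality: one step of \<open>P\<close> shifts each moment in
  \<open>moment_sum\<close> by one time unit, the two moments shifted to time \<open>n\<close> are bounded by \<open>g\<close>
  by (A), and \<open>g\<close> has drift at most \<open>m g + d\<close>.\<close>
lemma nn_integral_ell_P_le: "(\<integral>\<^sup>+x. L x \<partial>P y) \<le> ennreal (\<kappa> * L y)"
proof -
  let ?R = "\<lambda>t. \<integral>\<^sup>+x. \<bar>r x\<bar> \<partial>kpow P t y" and ?C = "\<lambda>t. \<integral>\<^sup>+x. \<bar>c x\<bar> \<partial>kpow P t y"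
  have moments_eq: "((\<Sum>t\<in>{1..<n}. ?R t) + g y) + ((\<Sum>t<n. ?C t) + g y) = ennreal (moment_sum y + 2 * g y)"
  proof -
    have "((\<Sum>t\<in>{1..<n}. ?R t) + g y) + ((\<Sum>t<n. ?C t) + g y) = ennreal (moment_sum y) + g y + g y"
      by (simp only: ennreal_moment_sum ac_simps)
    also have "\<dots> = ennreal (moment_sum y + 2 * g y)"
      using moment_sum_nonneg[of y] g_nonneg[of y] by (simp add: ennreal_plus[symmetric] del: ennreal_plus)
    finally show ?thesis .
  qed
  have "(\<integral>\<^sup>+x. L x \<partial>P y) = ennreal m' * ((\<Sum>t\<in>{1..<n}. \<integral>\<^sup>+x. (\<integral>\<^sup>+u. \<bar>r u\<bar> \<partial>kpow P t x) \<partial>P y)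
      + (\<Sum>t<n. \<integral>\<^sup>+x. (\<integral>\<^sup>+u. \<bar>c u\<bar> \<partial>kpow P t x) \<partial>P y)) + (\<integral>\<^sup>+x. g x \<partial>P y) + d'"
    by (simp add: ennreal_ell ennreal_moment_sum nn_integral_add nn_integral_cmult nn_integral_sum
        prob_space.emeasure_space_1[OF prob_space_P, simplified])
  also have "\<dots> = ennreal m' * ((\<Sum>t\<in>{1..<n}. ?R (Suc t)) + (\<Sum>t<n. ?C (Suc t))) + (\<integral>\<^sup>+x. g x \<partial>P y) + d'"
    by (simp add: nn_integral_kpow_Suc_first del: kpow.simps)
  also have "\<dots> \<le> ennreal m' * (((\<Sum>t\<in>{1..<n}. ?R t) + ?R n) + ((\<Sum>t<n. ?C t) + ?C n))
      + ennreal (m * g y + d) + d'"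
    by (intro add_mono mult_left_mono sum_atLeastLessThan_Suc_shift_le sum_lessThan_Suc_shift_le
        g_drift order_refl) auto
  also have "\<dots> \<le> ennreal m' * (((\<Sum>t\<in>{1..<n}. ?R t) + g y) + ((\<Sum>t<n. ?C t) + g y))
      + ennreal (m * g y + d) + d'"
    by (intro add_mono mult_left_mono order_refl r_le_g c_le_g) auto
  also have "\<dots> = ennreal m' * ennreal (moment_sum y + 2 * g y) + ennreal (m * g y + d) + ennreal d'"
    unfolding moments_eq by (rule refl)
  also have "\<dots> = ennreal (m' * (moment_sum y + 2 * g y) + (m * g y + d) + d')"
    using m'_pos d'_pos m_nonneg d_nonneg moment_sum_nonneg[of y] g_nonneg[of y]
    by (simp add: ennreal_plus[symmetric] ennreal_mult[symmetric] del: ennreal_plus)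
  also have "\<dots> \<le> ennreal (\<kappa> * L y)"
  proof (rule ennreal_leI)
    have "m' * moment_sum y \<le> \<kappa> * (m' * moment_sum y)"
      using kappa_gt_1 m'_pos moment_sum_nonneg[of y] by (simp add: mult_le_cancel_right1 not_less)
    then show "m' * (moment_sum y + 2 * g y) + (m * g y + d) + d' \<le> \<kappa> * L y"
      using d_le_d'_kappa by (simp add: ell_eq \<kappa>_def algebra_simps)
  qed
  finally show ?thesis .
qed

lemma ennreal_mult_ell: "a \<ge> 0 \<Longrightarrow> ennreal (a * L x) = ennreal a * ennreal (L x)"
  using ell_pos[of x] by (intro ennreal_mult) auto

lemma nn_integral_ell_kpow_le: "(\<integral>\<^sup>+x. L x \<partial>kpow P t y) \<le> ennreal (\<kappa> ^ t * L y)"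
proof (induction t arbitrary: y)
  case 0
  then show ?case by (simp add: nn_integral_return)
next
  case (Suc t)
  have "(\<integral>\<^sup>+x. L x \<partial>kpow P (Suc t) y) = (\<integral>\<^sup>+x. (\<integral>\<^sup>+u. L u \<partial>kpow P t x) \<partial>P y)"
    by (rule nn_integral_kpow_Suc_first) measurable
  also have "\<dots> \<le> (\<integral>\<^sup>+x. ennreal (\<kappa> ^ t) * L x \<partial>P y)"
    using Suc.IH kappa_gt_1 by (intro nn_integral_mono) (simp add: ennreal_mult_ell[symmetric])
  also have "\<dots> = ennreal (\<kappa> ^ t) * (\<integral>\<^sup>+x. L x \<partial>P y)"
    by (rule nn_integral_cmult) measurable
  also have "\<dots> \<le> ennreal (\<kappa> ^ t) * ennreal (\<kappa> * L y)"
    by (intro mult_left_mono nn_integral_ell_P_le) auto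
  also have "\<dots> = ennreal (\<kappa> ^ Suc t * L y)"
    using kappa_gt_1 ell_pos[of y] by (simp add: ennreal_mult[symmetric] mult_ac)
  finally show ?case .
qed

lemma nn_integral_kpow_le_ell:
  assumes [measurable]: "h \<in> borel_measurable borel"
    and le: "\<And>x. h x \<le> ennreal (a * L x)" and a: "a \<ge> 0"
  shows "(\<integral>\<^sup>+x. h x \<partial>kpow P t y) \<le> ennreal (a * \<kappa> ^ t * L y)"
proof -
  have "(\<integral>\<^sup>+x. h x \<partial>kpow P t y) \<le> (\<integral>\<^sup>+x. ennreal a * L x \<partial>kpow P t y)"
    using le a by (intro nn_integral_mono) (simp add: ennreal_mult_ell[symmetric])
  also have "\<dots> = ennreal a * (\<integral>\<^sup>+x. L x \<partial>kpow P t y)"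
    by (rule nn_integral_cmult) measurable
  also have "\<dots> \<le> ennreal a * ennreal (\<kappa> ^ t * L y)"
    by (intro mult_left_mono nn_integral_ell_kpow_le) auto
  also have "\<dots> = ennreal (a * \<kappa> ^ t * L y)"
    using a kappa_gt_1 ell_pos[of y] by (simp add: ennreal_mult[symmetric] mult.assoc)
  finally show ?thesis .
qed

definition K where "K = 1 + 1 / m' + m + d / d'"

lemma K_pos: "K > 0"
  using m'_pos d'_pos m_nonneg d_nonneg by (simp add: K_def add_pos_nonneg)

lemma K_ell_ge: "L y \<le> K * L y" "L y / m' \<le> K * L y" "m * L y + d \<le> K * L y"
proof -
  have "d = d / d' * d'" using d'_pos by simp
  also have "\<dots> \<le> d / d' * L y"
    using ell_ge[of y] g_nonneg[of y] d_nonneg d'_pos by (intro mult_left_mono) auto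
  finally have "d \<le> d / d' * L y" .
  moreover have "K * L y = L y + L y / m' + m * L y + d / d' * L y"
    by (simp add: K_def algebra_simps)
  moreover have "L y / m' \<ge> 0" "m * L y \<ge> 0" "d / d' * L y \<ge> 0"
    using ell_pos[of y] m'_pos d'_pos m_nonneg d_nonneg by auto
  ultimately show "L y \<le> K * L y" "L y / m' \<le> K * L y" "m * L y + d \<le> K * L y"
    using ell_pos[of y] by linarith+
qed

lemma integral_kpow_le_moment_sum:
  assumes "t < n"
  shows "(\<integral>x. \<bar>c x\<bar> \<partial>kpow P t y) \<le> moment_sum y" and "t \<ge> 1 \<Longrightarrow> (\<integral>x. \<bar>r x\<bar> \<partial>kpow P t y) \<le> moment_sum y"
proof -
  have "0 \<le> (\<Sum>t\<in>{1..<n}. \<integral>x. \<bar>r x\<bar> \<partial>kpow P t y)" "0 \<le> (\<Sum>t<n. \<integral>x. \<bar>c x\<bar> \<partial>kpow P t y)"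
    by (intro sum_nonneg integral_nonneg; simp)+
  note sums_nonneg = this
  have "(\<integral>x. \<bar>c x\<bar> \<partial>kpow P t y) \<le> (\<Sum>t<n. \<integral>x. \<bar>c x\<bar> \<partial>kpow P t y)"
    using assms by (intro member_le_sum) auto
  then show "(\<integral>x. \<bar>c x\<bar> \<partial>kpow P t y) \<le> moment_sum y"
    using sums_nonneg unfolding moment_sum_def by linarith
  assume "t \<ge> 1"
  then have "(\<integral>x. \<bar>r x\<bar> \<partial>kpow P t y) \<le> (\<Sum>t\<in>{1..<n}. \<integral>x. \<bar>r x\<bar> \<partial>kpow P t y)"
    using assms by (intro member_le_sum) auto
  then show "(\<integral>x. \<bar>r x\<bar> \<partial>kpow P t y) \<le> moment_sum y"
    using sums_nonneg unfolding moment_sum_def by linarith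
qed

lemma moment_sum_le_ell: "moment_sum y \<le> K * L y"
proof -
  have "m' * moment_sum y \<le> L y"
    using g_nonneg[of y] d'_pos by (simp add: ell_eq)
  also have "\<dots> \<le> m' * (K * L y)"
    using K_ell_ge(2)[of y] m'_pos by (simp add: field_simps)
  finally show ?thesis
    using m'_pos by simp
qed

lemma abs_c_le_ell: "\<bar>c y\<bar> \<le> K * L y"
proof (cases "n = 0")
  case True
  then have "\<bar>c y\<bar> \<le> g y"
    using c_le_g[of y] g_nonneg[of y] by (simp add: nn_integral_return)
  then show ?thesis
    using ell_ge[of y] K_ell_ge(1)[of y] d'_pos by linarith
next
  case False
  then show ?thesis
    using integral_kpow_le_moment_sum(1)[of 0 y] moment_sum_le_ell[of y] by (simp add: integral_return)
qed

lemma nn_integral_abs_r_P_le: "(\<integral>\<^sup>+x. \<bar>r x\<bar> \<partial>P y) \<le> ennreal (K * L y)"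
proof -
  consider "n = 0" | "n = 1" | "n \<ge> 2" by linarith
  then show ?thesis
  proof cases
    case 1
    then have "(\<integral>\<^sup>+x. \<bar>r x\<bar> \<partial>P y) \<le> (\<integral>\<^sup>+x. g x \<partial>P y)"
      using r_le_g by (intro nn_integral_mono) (simp add: nn_integral_return)
    also have "\<dots> \<le> ennreal (m * g y + d)"
      by (rule g_drift)
    also have "\<dots> \<le> ennreal (K * L y)"
      using K_ell_ge(3)[of y] ell_ge[of y] m_nonneg d'_pos mult_left_mono[of "g y" "L y" m]
      by (intro ennreal_leI) linarith
    finally show ?thesis .
  next
    case 2
    then have "(\<integral>\<^sup>+x. \<bar>r x\<bar> \<partial>P y) \<le> ennreal (g y)"
      using r_le_g[of y] by simp
    also have "\<dots> \<le> ennreal (K * L y)"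
      using K_ell_ge(1)[of y] ell_ge[of y] d'_pos by (intro ennreal_leI) linarith
    finally show ?thesis .
  next
    case 3
    have "(\<integral>\<^sup>+x. \<bar>r x\<bar> \<partial>P y) = ennreal (\<integral>x. \<bar>r x\<bar> \<partial>kpow P 1 y)"
      using integrable_r[of 1 y] 3 by (simp add: nn_integral_eq_integral)
    also have "\<dots> \<le> ennreal (K * L y)"
      using integral_kpow_le_moment_sum(2)[of 1 y] moment_sum_le_ell[of y] 3 by (intro ennreal_leI) simp
    finally show ?thesis .
  qed
qed

lemma nn_integral_abs_r_kpow_le: "(\<integral>\<^sup>+x. \<bar>r x\<bar> \<partial>kpow P t y) \<le> ennreal (\<bar>r y\<bar> + K * \<kappa> ^ t * L y)"
proof (cases t)
  case 0
  then show ?thesis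
    using K_pos ell_pos[of y] by (simp add: nn_integral_return ennreal_leI)
next
  case (Suc s)
  have "(\<integral>\<^sup>+x. \<bar>r x\<bar> \<partial>kpow P t y) = (\<integral>\<^sup>+x. (\<integral>\<^sup>+u. \<bar>r u\<bar> \<partial>P x) \<partial>kpow P s y)"
    unfolding Suc by (rule nn_integral_kpow_Suc) measurable
  also have "\<dots> \<le> ennreal (K * \<kappa> ^ s * L y)"
    using nn_integral_abs_r_P_le K_pos by (intro nn_integral_kpow_le_ell) auto
  also have "\<dots> \<le> ennreal (\<bar>r y\<bar> + K * \<kappa> ^ t * L y)"
    using kappa_gt_1 K_pos ell_pos[of y] Suc
    by (intro ennreal_leI) (auto intro: add_increasing mult_right_mono mult_left_mono power_increasing)
  finally show ?thesis .
qed

lemma nn_integral_kpow_le_r_ell: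
  assumes [measurable]: "h \<in> borel_measurable borel"
    and le: "\<And>x. \<bar>h x\<bar> \<le> \<bar>r x\<bar> + a * L x" and "a \<ge> 0"
  shows "(\<integral>\<^sup>+x. \<bar>h x\<bar> \<partial>kpow P t y) \<le> ennreal (\<bar>r y\<bar> + (K + a) * \<kappa> ^ t * L y)"
proof -
  have "(\<integral>\<^sup>+x. \<bar>h x\<bar> \<partial>kpow P t y) \<le> (\<integral>\<^sup>+x. ennreal \<bar>r x\<bar> + ennreal (a * L x) \<partial>kpow P t y)"
    using le \<open>a \<ge> 0\<close> ell_pos
    by (intro nn_integral_mono) (auto simp: ennreal_plus[symmetric] less_imp_le simp del: ennreal_plus)
  also have "\<dots> = (\<integral>\<^sup>+x. \<bar>r x\<bar> \<partial>kpow P t y) + (\<integral>\<^sup>+x. ennreal (a * L x) \<partial>kpow P t y)"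
    by (rule nn_integral_add) auto
  also have "\<dots> \<le> ennreal (\<bar>r y\<bar> + K * \<kappa> ^ t * L y) + ennreal (a * \<kappa> ^ t * L y)"
    using \<open>a \<ge> 0\<close> by (intro add_mono nn_integral_abs_r_kpow_le nn_integral_kpow_le_ell) auto
  also have "\<dots> = ennreal (\<bar>r y\<bar> + (K + a) * \<kappa> ^ t * L y)"
    using \<open>a \<ge> 0\<close> K_pos kappa_gt_1 ell_pos[of y]
    by (simp add: ennreal_plus[symmetric] algebra_simps del: ennreal_plus)
  finally show ?thesis .
qed

lemma nn_integral_kpow_finite:
  assumes "h \<in> borel_measurable borel" "\<And>x. \<bar>h x\<bar> \<le> \<bar>r x\<bar> + a * L x" "a \<ge> 0"
  shows "(\<integral>\<^sup>+x. \<bar>h x\<bar> \<partial>kpow P t y) < \<infinity>"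
  using nn_integral_kpow_le_r_ell[OF assms, of t y] by (simp add: le_less_trans)

lemma integrable_r_P: "integrable (P y) r"
  and integral_abs_r_P_le: "(\<integral>x. \<bar>r x\<bar> \<partial>P y) \<le> K * L y"
proof -
  have "(\<integral>\<^sup>+x. \<bar>r x\<bar> \<partial>P y) < \<infinity>"
    using nn_integral_abs_r_P_le[of y] by (simp add: le_less_trans)
  then show "integrable (P y) r"
    by (intro integrableI_bounded) auto
  then show "(\<integral>x. \<bar>r x\<bar> \<partial>P y) \<le> K * L y"
    using nn_integral_abs_r_P_le[of y] K_pos ell_pos[of y]
    by (simp add: nn_integral_eq_integral ennreal_le_iff)
qed

lemma integrable_ell_P: "integrable (P y) L"
  and integral_ell_P_le: "(\<integral>x. L x \<partial>P y) \<le> \<kappa> * L y"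
proof -
  have "(\<integral>\<^sup>+x. L x \<partial>P y) < \<infinity>"
    using nn_integral_ell_P_le[of y] by (simp add: le_less_trans)
  then show int: "integrable (P y) L"
    using ell_pos by (intro integrableI_nonneg) (auto intro: less_imp_le)
  have "ennreal (\<integral>x. L x \<partial>P y) = (\<integral>\<^sup>+x. L x \<partial>P y)"
    using int ell_pos by (intro nn_integral_eq_integral[symmetric]) (auto intro: less_imp_le)
  then show "(\<integral>x. L x \<partial>P y) \<le> \<kappa> * L y"
    using nn_integral_ell_P_le[of y] kappa_gt_1 ell_pos[of y]
    by (metis ennreal_le_iff less_imp_le mult_nonneg_nonneg order_less_trans zero_less_one)
qed

end

section \<open>The continuation value operator\<close>

locale continuation_problem =
  weighted_kernel P r c g m d m' d' n + feller_kernel P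
  for P :: "'z::topological_space \<Rightarrow> 'z measure" and r c g m d m' d' n +
  fixes \<beta> :: real
  assumes beta_pos: "0 < \<beta>" and beta_kappa: "\<beta> * (m + 2 * m') < 1"
    and cont_c: "continuous_on UNIV c" and cont_r: "continuous_on UNIV r"
    and cont_int_abs_r: "continuous_on UNIV (\<lambda>z. \<integral>z'. \<bar>r z'\<bar> \<partial>P z)"
    and cont_ell: "continuous_on UNIV (ell P r c g n m' d')"
    and cont_int_ell: "continuous_on UNIV (\<lambda>z. \<integral>z'. ell P r c g n m' d' z' \<partial>P z)"
begin

lemma beta_kappa_lt_1: "\<beta> * \<kappa> < 1"
  using beta_kappa by (simp add: \<kappa>_def)

lemma beta_lt_1: "\<beta> < 1"
  using mult_strict_left_mono[OF kappa_gt_1 beta_pos] beta_kappa_lt_1 by simp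

text \<open>The continuation value operator of the paper: if \<open>\<phi>\<close> is the value of continuing,
  \<open>Q \<phi>\<close> is the value of continuing for one more period.\<close>
definition Q :: "('z \<Rightarrow> real) \<Rightarrow> 'z \<Rightarrow> real" where
  "Q \<phi> z = c z + \<beta> * (\<integral>x. max (r x) (\<phi> x) \<partial>P z)"

definition ell_bounded :: "real \<Rightarrow> ('z \<Rightarrow> real) \<Rightarrow> bool" where
  "ell_bounded a \<phi> \<longleftrightarrow> continuous_on UNIV \<phi> \<and> (\<forall>x. \<bar>\<phi> x\<bar> \<le> a * L x)"

lemma ell_boundedD:
  assumes "ell_bounded a \<phi>"
  shows "\<phi> \<in> borel_measurable borel" "\<bar>\<phi> x\<bar> \<le> a * L x"
  using assms borel_measurable_continuous_onI by (auto simp: ell_bounded_def)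

lemma abs_max_le: "\<bar>\<phi> x\<bar> \<le> a * L x \<Longrightarrow> \<bar>max (r x) (\<phi> x)\<bar> \<le> \<bar>r x\<bar> + a * L x"
  by linarith

lemma abs_max_diff_le: "\<bar>max y u - max y v\<bar> \<le> \<bar>u - v\<bar>" for y u v :: real
  by linarith

lemma integrable_max_r:
  assumes "ell_bounded a \<phi>"
  shows "integrable (P z) (\<lambda>x. max (r x) (\<phi> x))"
    and "\<bar>\<integral>x. max (r x) (\<phi> x) \<partial>P z\<bar> \<le> (\<integral>x. \<bar>r x\<bar> \<partial>P z) + a * (\<integral>x. L x \<partial>P z)"
proof -
  note [measurable] = ell_boundedD(1)[OF assms]
  have int: "integrable (P z) (\<lambda>x. \<bar>r x\<bar> + a * L x)"
    by (intro Bochner_Integration.integrable_add integrable_abs integrable_r_P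
        Bochner_Integration.integrable_mult_right integrable_ell_P)
  show int_max: "integrable (P z) (\<lambda>x. max (r x) (\<phi> x))"
    by (rule Bochner_Integration.integrable_bound[OF int])
      (auto intro: order_trans[OF abs_max_le[OF ell_boundedD(2)[OF assms]] abs_ge_self])
  have "\<bar>\<integral>x. max (r x) (\<phi> x) \<partial>P z\<bar> \<le> (\<integral>x. \<bar>max (r x) (\<phi> x)\<bar> \<partial>P z)"
    by (rule integral_abs_bound)
  also have "\<dots> \<le> (\<integral>x. \<bar>r x\<bar> + a * L x \<partial>P z)"
    by (intro integral_mono integrable_abs int_max int abs_max_le ell_boundedD(2)[OF assms])
  also have "\<dots> = (\<integral>x. \<bar>r x\<bar> \<partial>P z) + a * (\<integral>x. L x \<partial>P z)"
    by (simp add: integrable_abs integrable_r_P integrable_ell_P)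
  finally show "\<bar>\<integral>x. max (r x) (\<phi> x) \<partial>P z\<bar> \<le> (\<integral>x. \<bar>r x\<bar> \<partial>P z) + a * (\<integral>x. L x \<partial>P z)" .
qed

lemma continuous_on_Q:
  assumes "ell_bounded a \<phi>"
  shows "continuous_on UNIV (Q \<phi>)"
proof -
  have int_w: "integrable (P z) (\<lambda>x. \<bar>r x\<bar> + a * L x)" for z
    by (intro Bochner_Integration.integrable_add integrable_abs integrable_r_P
        Bochner_Integration.integrable_mult_right integrable_ell_P)
  have "(\<integral>x. \<bar>r x\<bar> + a * L x \<partial>P z) = (\<integral>x. \<bar>r x\<bar> \<partial>P z) + a * (\<integral>x. L x \<partial>P z)" for z
    by (simp add: integrable_abs integrable_r_P integrable_ell_P)
  then have cont_int_w: "continuous_on UNIV (\<lambda>z. \<integral>x. \<bar>r x\<bar> + a * L x \<partial>P z)"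
    using cont_int_abs_r cont_int_ell by (simp add: continuous_on_add continuous_on_mult_left)
  have "continuous_on UNIV (\<lambda>z. \<integral>x. max (r x) (\<phi> x) \<partial>P z)"
  proof (rule continuous_on_integral_dominated[OF _ _ _ int_w cont_int_w])
    show "continuous_on UNIV (\<lambda>x. max (r x) (\<phi> x))"
      using assms cont_r by (intro continuous_on_max) (auto simp: ell_bounded_def)
    show "continuous_on UNIV (\<lambda>x. \<bar>r x\<bar> + a * L x)"
      using cont_r cont_ell by (intro continuous_on_add continuous_on_rabs continuous_on_mult_left)
    show "\<bar>max (r x) (\<phi> x)\<bar> \<le> \<bar>r x\<bar> + a * L x" for x
      by (rule abs_max_le[OF ell_boundedD(2)[OF assms]])
  qed
  then show ?thesis
    unfolding Q_def[abs_def] by (intro continuous_on_add continuous_on_mult_left cont_c)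
qed

lemma abs_Q_le:
  assumes "ell_bounded a \<phi>" and "a \<ge> 0"
  shows "\<bar>Q \<phi> z\<bar> \<le> (K + \<beta> * K + \<beta> * \<kappa> * a) * L z"
proof -
  have int_le: "\<bar>\<integral>x. max (r x) (\<phi> x) \<partial>P z\<bar> \<le> K * L z + a * (\<kappa> * L z)"
    using integrable_max_r(2)[OF assms(1), of z] integral_abs_r_P_le[of z]
      mult_left_mono[OF integral_ell_P_le[of z] assms(2)]
    by linarith
  have "\<bar>Q \<phi> z\<bar> \<le> \<bar>c z\<bar> + \<beta> * \<bar>\<integral>x. max (r x) (\<phi> x) \<partial>P z\<bar>"
    unfolding Q_def using beta_pos abs_triangle_ineq[of "c z" "\<beta> * _"] by (simp add: abs_mult)
  also have "\<dots> \<le> K * L z + \<beta> * (K * L z + a * (\<kappa> * L z))"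
    using abs_c_le_ell int_le beta_pos by (intro add_mono mult_left_mono) auto
  finally show ?thesis
    by (simp add: algebra_simps)
qed

lemma abs_Q_diff_le:
  assumes "ell_bounded a\<^sub>1 \<phi>\<^sub>1" "ell_bounded a\<^sub>2 \<phi>\<^sub>2"
    and diff: "\<And>x. \<bar>\<phi>\<^sub>1 x - \<phi>\<^sub>2 x\<bar> \<le> b * L x" and "b \<ge> 0"
  shows "\<bar>Q \<phi>\<^sub>1 z - Q \<phi>\<^sub>2 z\<bar> \<le> \<beta> * \<kappa> * b * L z"
proof -
  note int = integrable_max_r(1)[OF assms(1)] integrable_max_r(1)[OF assms(2)]
  have "\<bar>(\<integral>x. max (r x) (\<phi>\<^sub>1 x) \<partial>P z) - (\<integral>x. max (r x) (\<phi>\<^sub>2 x) \<partial>P z)\<bar>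
      = \<bar>\<integral>x. max (r x) (\<phi>\<^sub>1 x) - max (r x) (\<phi>\<^sub>2 x) \<partial>P z\<bar>"
    using int by simp
  also have "\<dots> \<le> (\<integral>x. \<bar>max (r x) (\<phi>\<^sub>1 x) - max (r x) (\<phi>\<^sub>2 x)\<bar> \<partial>P z)"
    by (rule integral_abs_bound)
  also have "\<dots> \<le> (\<integral>x. b * L x \<partial>P z)"
    using int diff integrable_ell_P
    by (intro integral_mono integrable_abs Bochner_Integration.integrable_diff
        Bochner_Integration.integrable_mult_right) (auto intro: order_trans[OF abs_max_diff_le])
  also have "\<dots> \<le> b * (\<kappa> * L z)"
    using integral_ell_P_le[of z] \<open>b \<ge> 0\<close> by (simp add: mult_left_mono)
  finally show ?thesis
    using beta_pos unfolding Q_def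
    by (simp add: abs_mult right_diff_distrib[symmetric] mult_left_mono mult_ac)
qed

definition C where "C = 2 * K / (1 - \<beta> * \<kappa>)"

lemma C_pos: "C > 0"
  using K_pos beta_kappa_lt_1 by (simp add: C_def)

lemma C_invariant: "K + \<beta> * K + \<beta> * \<kappa> * C \<le> C"
proof -
  have "C = 2 * K + \<beta> * \<kappa> * C"
    using beta_kappa_lt_1 by (simp add: C_def field_simps)
  moreover have "\<beta> * K \<le> K"
    using beta_lt_1 K_pos by simp
  ultimately show ?thesis
    by linarith
qed

definition Q_iter :: "nat \<Rightarrow> 'z \<Rightarrow> real" where
  "Q_iter k = (Q ^^ k) (\<lambda>_. 0)"

lemma Q_iter_Suc: "Q_iter (Suc k) = Q (Q_iter k)"
  by (simp add: Q_iter_def)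

lemma ell_bounded_Q_iter: "ell_bounded C (Q_iter k)"
proof (induction k)
  case 0
  then show ?case
    using C_pos ell_pos by (simp add: ell_bounded_def Q_iter_def less_imp_le)
next
  case (Suc k)
  have "\<bar>Q (Q_iter k) x\<bar> \<le> C * L x" for x
    using C_pos ell_pos[of x]
    by (intro order_trans[OF abs_Q_le[OF Suc] mult_right_mono[OF C_invariant]]) auto
  then show ?case
    using continuous_on_Q[OF Suc] by (simp add: ell_bounded_def Q_iter_Suc)
qed

lemma Q_iter_increment_le: "\<bar>Q_iter (Suc k) x - Q_iter k x\<bar> \<le> C * (\<beta> * \<kappa>) ^ k * L x"
proof (induction k arbitrary: x)
  case 0
  then show ?case
    using ell_boundedD(2)[OF ell_bounded_Q_iter, of 1 x] by (simp add: Q_iter_def)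
next
  case (Suc k)
  have "\<bar>Q (Q_iter (Suc k)) x - Q (Q_iter k) x\<bar> \<le> \<beta> * \<kappa> * (C * (\<beta> * \<kappa>) ^ k) * L x"
    using Suc C_pos beta_pos kappa_gt_1
    by (intro abs_Q_diff_le[OF ell_bounded_Q_iter ell_bounded_Q_iter]) auto
  then show ?case
    by (simp add: Q_iter_Suc mult_ac)
qed

text \<open>This will turn out to be the continuation value function \<open>\<psi>\<^sup>*\<close>.\<close>
definition \<psi> :: "'z \<Rightarrow> real" where
  "\<psi> x = lim (\<lambda>k. Q_iter k x)"

definition iteration_error :: "nat \<Rightarrow> real" where
  "iteration_error k = C * (\<beta> * \<kappa>) ^ k / (1 - \<beta> * \<kappa>)"

lemma iteration_error_nonneg: "iteration_error k \<ge> 0"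
  using C_pos beta_pos kappa_gt_1 beta_kappa_lt_1 by (simp add: iteration_error_def)

lemma iteration_error_tendsto_0: "iteration_error \<longlonglongrightarrow> 0"
proof -
  have "(\<lambda>k. C * (\<beta> * \<kappa>) ^ k / (1 - \<beta> * \<kappa>)) \<longlonglongrightarrow> C * 0 / (1 - \<beta> * \<kappa>)"
    using beta_pos kappa_gt_1 beta_kappa_lt_1
    by (intro tendsto_divide tendsto_mult tendsto_const LIMSEQ_power_zero) auto
  then show ?thesis
    by (simp add: iteration_error_def[abs_def])
qed

lemma Q_iter_tendsto_psi: "(\<lambda>k. Q_iter k x) \<longlonglongrightarrow> \<psi> x"
  and abs_psi_Q_iter_le: "\<bar>\<psi> x - Q_iter k x\<bar> \<le> iteration_error k * L x"
proof -
  have "\<bar>Q_iter (Suc k) x - Q_iter k x\<bar> \<le> (C * L x) * (\<beta> * \<kappa>) ^ k" for k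
    using Q_iter_increment_le[of k x] by (simp add: mult_ac)
  note limit = geometric_increments_limit[of "\<lambda>k. Q_iter k x", OF this]
  show "(\<lambda>k. Q_iter k x) \<longlonglongrightarrow> \<psi> x"
    using limit(1) beta_pos kappa_gt_1 beta_kappa_lt_1 by (simp add: \<psi>_def)
  show "\<bar>\<psi> x - Q_iter k x\<bar> \<le> iteration_error k * L x"
    using limit(2)[of k] beta_pos kappa_gt_1 beta_kappa_lt_1 by (simp add: \<psi>_def iteration_error_def mult_ac)
qed

lemma continuous_on_psi: "continuous_on UNIV \<psi>"
proof (rule continuous_on_weighted_limit[OF _ cont_ell _ iteration_error_tendsto_0 iteration_error_nonneg])
  show "continuous_on UNIV (Q_iter k)" for k
    using ell_bounded_Q_iter by (simp add: ell_bounded_def)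
  show "\<bar>Q_iter k x - \<psi> x\<bar> \<le> iteration_error k * L x" for k x
    using abs_psi_Q_iter_le by (simp add: abs_minus_commute)
qed

lemma ell_bounded_psi: "ell_bounded C \<psi>"
proof -
  have "\<bar>\<psi> x\<bar> \<le> C * L x" for x
    by (rule LIMSEQ_le_const2[OF tendsto_rabs[OF Q_iter_tendsto_psi]])
      (use ell_boundedD(2)[OF ell_bounded_Q_iter] in blast)
  then show ?thesis
    using continuous_on_psi by (simp add: ell_bounded_def)
qed

lemma Q_psi: "Q \<psi> = \<psi>"
proof
  fix z
  have "(\<lambda>k. Q_iter (Suc k) z - Q \<psi> z) \<longlonglongrightarrow> 0"
  proof (rule Lim_null_comparison)
    have "\<bar>Q (Q_iter k) z - Q \<psi> z\<bar> \<le> \<beta> * \<kappa> * iteration_error k * L z" for k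
      using abs_psi_Q_iter_le iteration_error_nonneg
      by (intro abs_Q_diff_le[OF ell_bounded_Q_iter ell_bounded_psi]) (auto simp: abs_minus_commute)
    then show "\<forall>\<^sub>F k in sequentially. norm (Q_iter (Suc k) z - Q \<psi> z) \<le> \<beta> * \<kappa> * iteration_error k * L z"
      by (simp add: Q_iter_Suc)
    have "(\<lambda>k. \<beta> * \<kappa> * iteration_error k * L z) \<longlonglongrightarrow> \<beta> * \<kappa> * 0 * L z"
      by (intro tendsto_mult tendsto_const iteration_error_tendsto_0)
    then show "(\<lambda>k. \<beta> * \<kappa> * iteration_error k * L z) \<longlonglongrightarrow> 0"
      by simp
  qed
  then have "(\<lambda>k. Q_iter (Suc k) z) \<longlonglongrightarrow> Q \<psi> z"
    by (simp add: LIM_zero_iff)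
  moreover have "(\<lambda>k. Q_iter (Suc k) z) \<longlonglongrightarrow> \<psi> z"
    using Q_iter_tendsto_psi by (rule LIMSEQ_Suc)
  ultimately show "Q \<psi> z = \<psi> z"
    by (rule LIMSEQ_unique)
qed

text \<open>This will turn out to be the value function \<open>v\<^sup>*\<close>.\<close>
definition v :: "'z \<Rightarrow> real" where
  "v x = max (r x) (\<psi> x)"

lemma continuous_on_v: "continuous_on UNIV v"
  unfolding v_def[abs_def] by (intro continuous_on_max cont_r continuous_on_psi)

lemma psi_eq: "\<psi> z = c z + \<beta> * (\<integral>x. v x \<partial>P z)"
  using fun_cong[OF Q_psi, of z] by (simp add: Q_def v_def)

lemma psi_measurable[measurable]: "\<psi> \<in> borel_measurable borel"
  using continuous_on_psi by (rule borel_measurable_continuous_onI)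

lemma v_measurable[measurable]: "v \<in> borel_measurable borel"
  using continuous_on_v by (rule borel_measurable_continuous_onI)

lemma abs_psi_le: "\<bar>\<psi> x\<bar> \<le> C * L x"
  using ell_bounded_psi by (rule ell_boundedD)

lemma r_le_v: "r x \<le> v x" and psi_le_v: "\<psi> x \<le> v x"
  by (auto simp: v_def)

lemma abs_v_le: "\<bar>v x\<bar> \<le> \<bar>r x\<bar> + C * L x"
  using abs_psi_le[of x] by (auto simp: v_def)

lemma abs_r_minus_v_le: "\<bar>r x - v x\<bar> \<le> \<bar>r x\<bar> + C * L x"
  using abs_psi_le[of x] by (auto simp: v_def)

end

section \<open>Optimal stopping\<close>

lemma measurable_the_enat[measurable]:
  fixes \<tau> :: "'w \<Rightarrow> enat"
  assumes [measurable]: "\<And>t. Measurable.pred M (\<lambda>\<omega>. \<tau> \<omega> = enat t)"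
  shows "(\<lambda>\<omega>. the_enat (\<tau> \<omega>)) \<in> M \<rightarrow>\<^sub>M count_space UNIV"
  unfolding measurable_count_space_eq2_countable
proof (intro conjI ballI)
  fix a :: nat
  have "(\<lambda>\<omega>. \<tau> \<omega> = \<infinity>) = (\<lambda>\<omega>. \<forall>t. \<tau> \<omega> \<noteq> enat t)"
    using not_infinity_eq by (auto simp: fun_eq_iff)
  moreover have "Measurable.pred M (\<lambda>\<omega>. \<forall>t. \<tau> \<omega> \<noteq> enat t)"
    by measurable
  ultimately have [measurable]: "Measurable.pred M (\<lambda>\<omega>. \<tau> \<omega> = \<infinity>)"
    by simp
  have "the_enat (\<tau> \<omega>) = a \<longleftrightarrow> \<tau> \<omega> = enat a \<or> (\<tau> \<omega> = \<infinity> \<and> the_enat \<infinity> = a)" for \<omega>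
    by (cases "\<tau> \<omega>") auto
  then have "(\<lambda>\<omega>. the_enat (\<tau> \<omega>)) -` {a} \<inter> space M = {\<omega>\<in>space M. \<tau> \<omega> = enat a \<or> (\<tau> \<omega> = \<infinity> \<and> the_enat \<infinity> = a)}"
    by auto
  also have "\<dots> \<in> sets M"
    by measurable
  finally show "(\<lambda>\<omega>. the_enat (\<tau> \<omega>)) -` {a} \<inter> space M \<in> sets M" .
qed auto

locale optimal_stopping =
  continuation_problem P r c g m d m' d' n \<beta> + markov_chain P z M F X
  for P :: "'z::topological_space \<Rightarrow> 'z measure" and r c g m d m' d' n \<beta>
    and z :: 'z and M :: "'w measure" and F X
begin

lemma integrable_X_if_bounded:
  assumes [measurable]: "h \<in> borel_measurable borel" "Measurable.pred M A"
    and "\<And>x. \<bar>h x\<bar> \<le> \<bar>r x\<bar> + a * L x" "a \<ge> 0"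
  shows "integrable M (\<lambda>\<omega>. if A \<omega> then h (X t \<omega>) else 0)"
  using assms by (intro integrable_X_if nn_integral_kpow_finite) auto

definition payoff :: "nat \<Rightarrow> 'w \<Rightarrow> real" where
  "payoff j \<omega> = (\<Sum>t<j. \<beta> ^ t * c (X t \<omega>)) + \<beta> ^ j * r (X j \<omega>)"

definition payoff_bound :: "nat \<Rightarrow> 'w \<Rightarrow> real" where
  "payoff_bound j \<omega> = (\<Sum>t<Suc j. \<beta> ^ t * (\<bar>c (X t \<omega>)\<bar> + \<bar>r (X t \<omega>)\<bar>))"

lemma payoff_measurable[measurable]: "payoff j \<in> borel_measurable M"
  unfolding payoff_def by measurable

lemma payoff_bound_measurable[measurable]: "payoff_bound j \<in> borel_measurable M"
  unfolding payoff_bound_def by measurable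

lemma abs_payoff_le:
  assumes "i \<le> j"
  shows "\<bar>payoff i \<omega>\<bar> \<le> payoff_bound j \<omega>"
proof -
  have "\<bar>payoff i \<omega>\<bar> \<le> (\<Sum>t<i. \<beta> ^ t * \<bar>c (X t \<omega>)\<bar>) + \<beta> ^ i * \<bar>r (X i \<omega>)\<bar>"
    unfolding payoff_def using beta_pos
    by (intro order_trans[OF abs_triangle_ineq] add_mono order_trans[OF sum_abs])
      (auto simp: abs_mult)
  also have "\<dots> \<le> payoff_bound i \<omega>"
    unfolding payoff_bound_def using beta_pos
    by (simp add: add_mono sum_mono mult_left_mono)
  also have "\<dots> \<le> payoff_bound j \<omega>"
    unfolding payoff_bound_def using assms beta_pos by (intro sum_mono2) auto
  finally show ?thesis .
qed

lemma nn_integral_abs_c_plus_abs_r_kpow_le: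
  "(\<integral>\<^sup>+x. ennreal (\<bar>c x\<bar> + \<bar>r x\<bar>) \<partial>kpow P t z) \<le> ennreal (\<bar>r z\<bar> + 2 * K * \<kappa> ^ t * L z)"
proof -
  have "(\<integral>\<^sup>+x. \<bar>\<bar>c x\<bar> + \<bar>r x\<bar>\<bar> \<partial>kpow P t z) \<le> ennreal (\<bar>r z\<bar> + (K + K) * \<kappa> ^ t * L z)"
    using abs_c_le_ell K_pos by (intro nn_integral_kpow_le_r_ell) auto
  moreover have "K + K = 2 * K"
    by simp
  ultimately show ?thesis
    by (simp del: ennreal_plus)
qed

text \<open>The summability of \<open>\<beta>\<^sup>t \<kappa>\<^sup>t\<close> is what makes the payoff of an arbitrary a.s.\ finite stopping
  time integrable.\<close>
lemma integrable_payoff_bound_stopped: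
  fixes \<tau> :: "'w \<Rightarrow> nat"
  assumes [measurable]: "\<tau> \<in> M \<rightarrow>\<^sub>M count_space UNIV"
  shows "integrable M (\<lambda>\<omega>. payoff_bound (\<tau> \<omega>) \<omega>)"
proof (rule integrableI_bounded)
  define f where "f t \<omega> = ennreal (\<beta> ^ t * (\<bar>c (X t \<omega>)\<bar> + \<bar>r (X t \<omega>)\<bar>))" for t \<omega>
  have [measurable]: "f t \<in> borel_measurable M" for t
    unfolding f_def by measurable
  define b where "b t = \<beta> ^ t * (\<bar>r z\<bar> + 2 * K * \<kappa> ^ t * L z)" for t
  have b_nonneg: "b t \<ge> 0" for t
    using beta_pos K_pos kappa_gt_1 ell_pos[of z] by (simp add: b_def)
  have "b = (\<lambda>t. \<bar>r z\<bar> * \<beta> ^ t + (2 * K * L z) * (\<beta> * \<kappa>) ^ t)"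
    by (auto simp: b_def fun_eq_iff power_mult_distrib algebra_simps)
  then have summable_b: "summable b"
    using beta_pos beta_lt_1 kappa_gt_1 beta_kappa_lt_1
    by (simp add: summable_add summable_mult summable_geometric)
  have "ennreal (norm (payoff_bound (\<tau> \<omega>) \<omega>)) \<le> (\<Sum>t. f t \<omega>)" for \<omega>
  proof -
    have "ennreal (payoff_bound (\<tau> \<omega>) \<omega>) = (\<Sum>t<Suc (\<tau> \<omega>). f t \<omega>)"
      unfolding payoff_bound_def f_def using beta_pos by (subst sum_ennreal) auto
    also have "\<dots> \<le> (\<Sum>t. f t \<omega>)"
      by (rule sum_le_suminf) auto
    finally show ?thesis
      using beta_pos by (simp add: payoff_bound_def sum_nonneg del: sum.lessThan_Suc)
  qed
  then have "(\<integral>\<^sup>+\<omega>. norm (payoff_bound (\<tau> \<omega>) \<omega>) \<partial>M) \<le> (\<integral>\<^sup>+\<omega>. (\<Sum>t. f t \<omega>) \<partial>M)"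
    by (rule nn_integral_mono)
  also have "\<dots> = (\<Sum>t. \<integral>\<^sup>+\<omega>. f t \<omega> \<partial>M)"
    by (rule nn_integral_suminf) simp
  also have "\<dots> \<le> (\<Sum>t. ennreal (b t))"
  proof (intro suminf_le allI)
    fix t
    have "(\<integral>\<^sup>+\<omega>. f t \<omega> \<partial>M) = ennreal (\<beta> ^ t) * (\<integral>\<^sup>+x. ennreal (\<bar>c x\<bar> + \<bar>r x\<bar>) \<partial>kpow P t z)"
      unfolding f_def using beta_pos
      by (simp add: ennreal_mult nn_integral_cmult nn_integral_X[symmetric] del: ennreal_plus)
    also have "\<dots> \<le> ennreal (\<beta> ^ t) * ennreal (\<bar>r z\<bar> + 2 * K * \<kappa> ^ t * L z)"
      using nn_integral_abs_c_plus_abs_r_kpow_le by (rule mult_left_mono) simp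
    also have "\<dots> = ennreal (b t)"
      unfolding b_def using K_pos kappa_gt_1 ell_pos[of z] by (intro ennreal_mult''[symmetric]) simp
    finally show "(\<integral>\<^sup>+\<omega>. f t \<omega> \<partial>M) \<le> ennreal (b t)" .
  qed auto
  also have "\<dots> = ennreal (\<Sum>t. b t)"
    by (rule suminf_ennreal2[OF b_nonneg summable_b])
  finally show "(\<integral>\<^sup>+\<omega>. ennreal (norm (payoff_bound (\<tau> \<omega>) \<omega>)) \<partial>M) < \<infinity>"
    by (simp add: le_less_trans)
qed (simp add: measurable_compose_countable)

context
  fixes \<tau> :: "'w \<Rightarrow> enat"
  assumes stopping_time: "enat_stopping_time F \<tau>"
begin

lemma pred_F_stopped: "Measurable.pred (F t) (\<lambda>\<omega>. \<tau> \<omega> \<le> enat t)"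
  using stopping_time by (simp add: enat_stopping_time_def)

lemma pred_F_running: "Measurable.pred (F t) (\<lambda>\<omega>. enat t < \<tau> \<omega>)"
  using pred_F_stopped[of t] by (simp add: not_le[symmetric])

lemma pred_stopping_time[measurable]:
  "Measurable.pred M (\<lambda>\<omega>. \<tau> \<omega> \<le> enat t)" "Measurable.pred M (\<lambda>\<omega>. enat t < \<tau> \<omega>)"
  "Measurable.pred M (\<lambda>\<omega>. \<tau> \<omega> = enat t)" "Measurable.pred M (\<lambda>\<omega>. enat t \<le> \<tau> \<omega>)"
proof -
  show [measurable]: "Measurable.pred M (\<lambda>\<omega>. \<tau> \<omega> \<le> enat t)" for t
    using pred_F_stopped by (rule pred_F_imp_M)
  then show "Measurable.pred M (\<lambda>\<omega>. enat t < \<tau> \<omega>)"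
    by (simp add: not_le[symmetric])
  have "\<tau> \<omega> = enat t \<longleftrightarrow> \<tau> \<omega> \<le> enat t \<and> \<not> (t > 0 \<and> \<tau> \<omega> \<le> enat (t - 1))" for \<omega>
    by (cases "\<tau> \<omega>") auto
  then show "Measurable.pred M (\<lambda>\<omega>. \<tau> \<omega> = enat t)"
    by simp
  have "enat t \<le> \<tau> \<omega> \<longleftrightarrow> \<not> (t > 0 \<and> \<tau> \<omega> \<le> enat (t - 1))" for \<omega>
    by (cases "\<tau> \<omega>") auto
  then show "Measurable.pred M (\<lambda>\<omega>. enat t \<le> \<tau> \<omega>)"
    by simp
qed

text \<open>The payoff of stopping at \<open>\<tau>\<close> if this happens before time \<open>k\<close>, and otherwise of
  stopping at \<open>k\<close> with terminal reward \<open>u\<close>.\<close>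
definition truncated_payoff :: "('z \<Rightarrow> real) \<Rightarrow> nat \<Rightarrow> 'w \<Rightarrow> real" where
  "truncated_payoff u k \<omega> =
    (\<Sum>t<k. \<beta> ^ t * (if enat t < \<tau> \<omega> then c (X t \<omega>) else 0)
      + \<beta> ^ t * (if \<tau> \<omega> = enat t then r (X t \<omega>) else 0))
    + \<beta> ^ k * (if enat k \<le> \<tau> \<omega> then u (X k \<omega>) else 0)"

lemma integrable_truncated_payoff:
  assumes [measurable]: "u \<in> borel_measurable borel"
    and "\<And>x. \<bar>u x\<bar> \<le> \<bar>r x\<bar> + a * L x" "a \<ge> 0"
  shows "integrable M (truncated_payoff u k)"
proof -
  have "integrable M (\<lambda>\<omega>. if enat t < \<tau> \<omega> then c (X t \<omega>) else 0)" for t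
    using abs_c_le_ell K_pos by (intro integrable_X_if_bounded[where a=K]) (auto intro: add_increasing)
  moreover have "integrable M (\<lambda>\<omega>. if \<tau> \<omega> = enat t then r (X t \<omega>) else 0)" for t
    by (intro integrable_X_if_bounded[where a=0]) auto
  moreover have "integrable M (\<lambda>\<omega>. if enat k \<le> \<tau> \<omega> then u (X k \<omega>) else 0)"
    using assms by (intro integrable_X_if_bounded) auto
  ultimately show ?thesis
    by (simp add: truncated_payoff_def[abs_def])
qed

lemma integral_truncated_payoff_0:
  assumes [measurable]: "u \<in> borel_measurable borel"
  shows "(\<integral>\<omega>. truncated_payoff u 0 \<omega> \<partial>M) = u z"
proof -
  have "(\<integral>\<omega>. truncated_payoff u 0 \<omega> \<partial>M) = (\<integral>\<omega>. u z \<partial>M)"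
    by (rule integral_cong_AE)
      (use AE_X_0 in \<open>auto simp: truncated_payoff_def zero_enat_def[symmetric] elim!: eventually_mono\<close>)
  then show ?thesis
    by (simp add: M.prob_space)
qed

definition stop_gap :: "nat \<Rightarrow> 'w \<Rightarrow> real" where
  "stop_gap k \<omega> = (if \<tau> \<omega> = enat k then r (X k \<omega>) - v (X k \<omega>) else 0)"

definition continue_gap :: "nat \<Rightarrow> 'w \<Rightarrow> real" where
  "continue_gap k \<omega> = (if enat k < \<tau> \<omega> then \<psi> (X k \<omega>) - v (X k \<omega>) else 0)"

lemma integrable_stop_gap: "integrable M (stop_gap k)"
  unfolding stop_gap_def[abs_def] using C_pos abs_r_minus_v_le
  by (intro integrable_X_if_bounded[where a=C]) auto

lemma integrable_continue_gap: "integrable M (continue_gap k)"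
proof -
  have "\<bar>\<psi> x - v x\<bar> \<le> \<bar>r x\<bar> + (C + C) * L x" for x
    using abs_psi_le[of x] abs_v_le[of x] by (simp add: algebra_simps)
  then show ?thesis
    unfolding continue_gap_def[abs_def] using C_pos
    by (intro integrable_X_if_bounded[where a="C + C"]) auto
qed

text \<open>Together with \<open>\<psi> = c + \<beta> P v\<close>, this shows that continuing for one more step changes the
  expected truncated payoff by the expected \<open>continue_gap\<close>.\<close>
lemma integral_running_v_Suc:
  "integrable M (\<lambda>\<omega>. if enat k < \<tau> \<omega> then (\<integral>x. v x \<partial>P (X k \<omega>)) else 0)"
  "(\<integral>\<omega>. (if enat k < \<tau> \<omega> then v (X (Suc k) \<omega>) else 0) \<partial>M)
     = (\<integral>\<omega>. (if enat k < \<tau> \<omega> then (\<integral>x. v x \<partial>P (X k \<omega>)) else 0) \<partial>M)"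
proof -
  let ?A = "{\<omega>\<in>space M. enat k < \<tau> \<omega>}"
  have A: "?A \<in> sets (F k)"
    using pred_F_running[of k] by (simp add: pred_def)
  have "(\<integral>\<^sup>+x. \<bar>v x\<bar> \<partial>kpow P (Suc k) z) < \<infinity>"
    using abs_v_le C_pos by (intro nn_integral_kpow_finite) auto
  note markov = integral_X_Suc_restrict[OF A v_measurable this]
  show "integrable M (\<lambda>\<omega>. if enat k < \<tau> \<omega> then (\<integral>x. v x \<partial>P (X k \<omega>)) else 0)"
    using markov(1) by (subst (asm) Bochner_Integration.integrable_cong[OF refl]) (auto simp: indicator_def)
  show "(\<integral>\<omega>. (if enat k < \<tau> \<omega> then v (X (Suc k) \<omega>) else 0) \<partial>M)
     = (\<integral>\<omega>. (if enat k < \<tau> \<omega> then (\<integral>x. v x \<partial>P (X k \<omega>)) else 0) \<partial>M)"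
  proof -
    have "(\<integral>\<omega>. (if enat k < \<tau> \<omega> then v (X (Suc k) \<omega>) else 0) \<partial>M)
        = (\<integral>\<omega>. indicator ?A \<omega> * v (X (Suc k) \<omega>) \<partial>M)"
      by (rule Bochner_Integration.integral_cong) (auto simp: indicator_def)
    also have "\<dots> = (\<integral>\<omega>. indicator ?A \<omega> * (\<integral>x. v x \<partial>P (X k \<omega>)) \<partial>M)"
      by (rule markov(2))
    also have "\<dots> = (\<integral>\<omega>. (if enat k < \<tau> \<omega> then (\<integral>x. v x \<partial>P (X k \<omega>)) else 0) \<partial>M)"
      by (rule Bochner_Integration.integral_cong) (auto simp: indicator_def)
    finally show ?thesis .
  qed
qed

lemma integrable_truncated_payoff_v: "integrable M (truncated_payoff v k)"
  using abs_v_le C_pos by (intro integrable_truncated_payoff) auto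

lemma integrable_truncated_payoff_r: "integrable M (truncated_payoff r k)"
  by (intro integrable_truncated_payoff[where a=0]) auto

lemma integral_truncated_payoff_Suc:
  "(\<integral>\<omega>. truncated_payoff v (Suc k) \<omega> \<partial>M)
     = (\<integral>\<omega>. truncated_payoff v k \<omega> \<partial>M) + \<beta> ^ k * ((\<integral>\<omega>. stop_gap k \<omega> \<partial>M) + (\<integral>\<omega>. continue_gap k \<omega> \<partial>M))"
proof -
  define cost where "cost \<omega> = (if enat k < \<tau> \<omega> then c (X k \<omega>) - v (X k \<omega>) else 0)" for \<omega>
  define next_v where "next_v \<omega> = (if enat k < \<tau> \<omega> then v (X (Suc k) \<omega>) else 0)" for \<omega>
  define expected_next_v where
    "expected_next_v \<omega> = (if enat k < \<tau> \<omega> then (\<integral>x. v x \<partial>P (X k \<omega>)) else 0)" for \<omega>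
  have step: "truncated_payoff v (Suc k) \<omega>
      = truncated_payoff v k \<omega> + \<beta> ^ k * stop_gap k \<omega> + \<beta> ^ k * cost \<omega> + \<beta> ^ Suc k * next_v \<omega>" for \<omega>
  proof -
    have "enat k \<le> \<tau> \<omega> \<longleftrightarrow> \<tau> \<omega> = enat k \<or> enat k < \<tau> \<omega>"
      by auto
    moreover have "enat (Suc k) \<le> \<tau> \<omega> \<longleftrightarrow> enat k < \<tau> \<omega>"
      by (rule Suc_ile_eq)
    ultimately show ?thesis
      by (auto simp: truncated_payoff_def stop_gap_def cost_def next_v_def algebra_simps)
  qed
  have "\<bar>c x - v x\<bar> \<le> \<bar>r x\<bar> + (K + C) * L x" for x
    using abs_c_le_ell[of x] abs_v_le[of x] by (simp add: algebra_simps)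
  then have int_cost: "integrable M cost"
    unfolding cost_def[abs_def] using K_pos C_pos
    by (intro integrable_X_if_bounded[where a="K + C"]) auto
  have int_next_v: "integrable M next_v"
    unfolding next_v_def[abs_def] using abs_v_le C_pos by (intro integrable_X_if_bounded) auto
  have "(\<integral>\<omega>. truncated_payoff v (Suc k) \<omega> \<partial>M) = (\<integral>\<omega>. truncated_payoff v k \<omega> \<partial>M)
      + \<beta> ^ k * (\<integral>\<omega>. stop_gap k \<omega> \<partial>M) + \<beta> ^ k * (\<integral>\<omega>. cost \<omega> \<partial>M) + \<beta> ^ Suc k * (\<integral>\<omega>. next_v \<omega> \<partial>M)"
    using integrable_truncated_payoff_v integrable_stop_gap int_cost int_next_v by (simp add: step)
  moreover have "(\<integral>\<omega>. next_v \<omega> \<partial>M) = (\<integral>\<omega>. expected_next_v \<omega> \<partial>M)"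
    unfolding next_v_def expected_next_v_def by (rule integral_running_v_Suc(2))
  moreover have "(\<integral>\<omega>. continue_gap k \<omega> \<partial>M) = (\<integral>\<omega>. cost \<omega> + \<beta> * expected_next_v \<omega> \<partial>M)"
    by (rule Bochner_Integration.integral_cong)
      (auto simp: continue_gap_def cost_def expected_next_v_def psi_eq algebra_simps)
  moreover have "integrable M expected_next_v"
    unfolding expected_next_v_def[abs_def] by (rule integral_running_v_Suc(1))
  ultimately show ?thesis
    using int_cost by (simp add: algebra_simps)
qed

lemma integral_truncated_payoff_v_le: "(\<integral>\<omega>. truncated_payoff v k \<omega> \<partial>M) \<le> v z"
proof (induction k)
  case 0
  then show ?case by (simp add: integral_truncated_payoff_0)
next
  case (Suc k)
  have "(\<integral>\<omega>. stop_gap k \<omega> \<partial>M) \<le> (\<integral>\<omega>. 0 \<partial>M)"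
    by (rule integral_mono[OF integrable_stop_gap integrable_zero]) (simp add: stop_gap_def r_le_v)
  moreover have "(\<integral>\<omega>. continue_gap k \<omega> \<partial>M) \<le> (\<integral>\<omega>. 0 \<partial>M)"
    by (rule integral_mono[OF integrable_continue_gap integrable_zero]) (simp add: continue_gap_def psi_le_v)
  ultimately have "\<beta> ^ k * ((\<integral>\<omega>. stop_gap k \<omega> \<partial>M) + (\<integral>\<omega>. continue_gap k \<omega> \<partial>M)) \<le> 0"
    using beta_pos by (simp add: mult_nonneg_nonpos)
  then show ?case
    using Suc integral_truncated_payoff_Suc[of k] by linarith
qed

lemma truncated_payoff_stopped:
  assumes "\<tau> \<omega> = enat j" "j < k"
  shows "truncated_payoff u k \<omega> = payoff j \<omega>"
proof -
  have "(\<Sum>t<k. \<beta> ^ t * (if enat t < \<tau> \<omega> then c (X t \<omega>) else 0)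
        + \<beta> ^ t * (if \<tau> \<omega> = enat t then r (X t \<omega>) else 0))
      = (\<Sum>t<k. (if t < j then \<beta> ^ t * c (X t \<omega>) else 0) + (if t = j then \<beta> ^ t * r (X t \<omega>) else 0))"
    using assms by (intro sum.cong) auto
  then have "truncated_payoff u k \<omega>
      = (\<Sum>t<k. if t < j then \<beta> ^ t * c (X t \<omega>) else 0) + (\<Sum>t<k. if t = j then \<beta> ^ t * r (X t \<omega>) else 0)"
    using assms by (simp add: truncated_payoff_def sum.distrib)
  also have "\<dots> = payoff j \<omega>"
    using assms by (simp add: sum_lessThan_if_less payoff_def)
  finally show ?thesis .
qed

lemma abs_truncated_payoff_r_le:
  assumes "\<tau> \<omega> = enat j"
  shows "\<bar>truncated_payoff r k \<omega>\<bar> \<le> payoff_bound j \<omega>"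
proof (cases "k \<le> j")
  case True
  then have "truncated_payoff r k \<omega> = payoff k \<omega>"
    using assms by (auto simp: truncated_payoff_def payoff_def intro!: sum.cong)
  then show ?thesis
    using abs_payoff_le[OF True] by simp
next
  case False
  then show ?thesis
    using assms truncated_payoff_stopped[OF assms, of k r] abs_payoff_le[of j j] by simp
qed

text \<open>By dominated convergence from the truncated payoffs, whose expectations are bounded by
  \<open>v z\<close>.\<close>
lemma integral_payoff_le_v:
  assumes finite: "AE \<omega> in M. \<tau> \<omega> \<noteq> \<infinity>"
  shows "(\<integral>\<omega>. payoff (the_enat (\<tau> \<omega>)) \<omega> \<partial>M) \<le> v z"
proof -
  have the_enat_measurable[measurable]: "(\<lambda>\<omega>. the_enat (\<tau> \<omega>)) \<in> M \<rightarrow>\<^sub>M count_space UNIV"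
    by measurable
  have "(\<lambda>k. \<integral>\<omega>. truncated_payoff r k \<omega> \<partial>M) \<longlonglongrightarrow> (\<integral>\<omega>. payoff (the_enat (\<tau> \<omega>)) \<omega> \<partial>M)"
  proof (rule integral_dominated_convergence[OF _ _ integrable_payoff_bound_stopped[OF the_enat_measurable]])
    show "(\<lambda>\<omega>. payoff (the_enat (\<tau> \<omega>)) \<omega>) \<in> borel_measurable M"
      by (simp add: measurable_compose_countable)
    show "truncated_payoff r k \<in> borel_measurable M" for k
      by (rule borel_measurable_integrable[OF integrable_truncated_payoff_r])
    show "AE \<omega> in M. (\<lambda>k. truncated_payoff r k \<omega>) \<longlonglongrightarrow> payoff (the_enat (\<tau> \<omega>)) \<omega>"
      using finite
    proof eventually_elim
      case (elim \<omega>)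
      then obtain j where j: "\<tau> \<omega> = enat j" by auto
      have "\<forall>\<^sub>F k in sequentially. truncated_payoff r k \<omega> = payoff (the_enat (\<tau> \<omega>)) \<omega>"
        using eventually_gt_at_top[of j] by eventually_elim (simp add: truncated_payoff_stopped[OF j] j)
      then show ?case
        by (rule tendsto_eventually)
    qed
    show "AE \<omega> in M. norm (truncated_payoff r k \<omega>) \<le> payoff_bound (the_enat (\<tau> \<omega>)) \<omega>" for k
      using finite by eventually_elim (auto simp: abs_truncated_payoff_r_le)
  qed
  moreover have "(\<integral>\<omega>. truncated_payoff r k \<omega> \<partial>M) \<le> v z" for k
  proof -
    have "(\<integral>\<omega>. truncated_payoff r k \<omega> \<partial>M) \<le> (\<integral>\<omega>. truncated_payoff v k \<omega> \<partial>M)"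
      by (rule integral_mono[OF integrable_truncated_payoff_r integrable_truncated_payoff_v])
        (use beta_pos in \<open>auto simp: truncated_payoff_def r_le_v intro!: mult_left_mono\<close>)
    then show ?thesis
      using integral_truncated_payoff_v_le[of k] by linarith
  qed
  ultimately show ?thesis
    by (intro LIMSEQ_le_const2) auto
qed

end

definition hitting_time :: "nat \<Rightarrow> 'w \<Rightarrow> nat" where
  "hitting_time N \<omega> = (LEAST j. j = N \<or> \<psi> (X j \<omega>) \<le> r (X j \<omega>))"

lemma hitting_time_le: "hitting_time N \<omega> \<le> N"
  unfolding hitting_time_def by (rule Least_le) simp

lemma hitting_time_stops: "hitting_time N \<omega> = N \<or> \<psi> (X (hitting_time N \<omega>) \<omega>) \<le> r (X (hitting_time N \<omega>) \<omega>)"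
  unfolding hitting_time_def by (rule LeastI[of _ N]) simp

lemma hitting_time_continues: "k < hitting_time N \<omega> \<Longrightarrow> r (X k \<omega>) < \<psi> (X k \<omega>)"
  using not_less_Least[of k "\<lambda>j. j = N \<or> \<psi> (X j \<omega>) \<le> r (X j \<omega>)"]
  by (auto simp: hitting_time_def)

lemma hitting_time_le_iff: "hitting_time N \<omega> \<le> t \<longleftrightarrow> (\<exists>j\<le>t. j = N \<or> \<psi> (X j \<omega>) \<le> r (X j \<omega>))"
  using hitting_time_stops[of N \<omega>]
  by (auto simp: hitting_time_def intro: Least_le[THEN order_trans])

lemma stopping_time_hitting_time: "enat_stopping_time F (\<lambda>\<omega>. enat (hitting_time N \<omega>))"
  unfolding enat_stopping_time_def enat_ord_simps hitting_time_le_iff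
proof
  fix t
  have [measurable]: "X j \<in> F t \<rightarrow>\<^sub>M borel" if "j \<le> t" for j
    using that by (rule X_measurable_F)
  show "Measurable.pred (F t) (\<lambda>\<omega>. \<exists>j\<le>t. j = N \<or> \<psi> (X j \<omega>) \<le> r (X j \<omega>))"
    unfolding Ex_less_Suc[symmetric] le_less_Suc_eq by measurable
qed

lemma abs_integral_stop_gap_le:
  assumes "enat_stopping_time F \<tau>"
  shows "\<bar>\<integral>\<omega>. stop_gap \<tau> N \<omega> \<partial>M\<bar> \<le> \<bar>r z\<bar> + (K + C) * \<kappa> ^ N * L z"
proof -
  define B where "B = \<bar>r z\<bar> + (K + C) * \<kappa> ^ N * L z"
  have "B \<ge> 0"
    using K_pos C_pos kappa_gt_1 ell_pos[of z] by (simp add: B_def)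
  have nn_le: "(\<integral>\<^sup>+x. \<bar>r x - v x\<bar> \<partial>kpow P N z) \<le> ennreal B"
    unfolding B_def using abs_r_minus_v_le C_pos by (intro nn_integral_kpow_le_r_ell) auto
  then have integrable: "integrable (kpow P N z) (\<lambda>x. \<bar>r x - v x\<bar>)"
    by (intro integrableI_bounded) (auto simp: le_less_trans)
  then have "ennreal (\<integral>x. \<bar>r x - v x\<bar> \<partial>kpow P N z) \<le> ennreal B"
    using nn_le by (simp add: nn_integral_eq_integral)
  then have "(\<integral>x. \<bar>r x - v x\<bar> \<partial>kpow P N z) \<le> B"
    using \<open>B \<ge> 0\<close> by simp
  moreover have "\<bar>\<integral>\<omega>. stop_gap \<tau> N \<omega> \<partial>M\<bar> \<le> (\<integral>\<omega>. \<bar>r (X N \<omega>) - v (X N \<omega>)\<bar> \<partial>M)"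
  proof (intro order_trans[OF integral_abs_bound] integral_mono integrable_abs integrable_stop_gap[OF assms])
    have "integrable (kpow P N z) (\<lambda>x. r x - v x)"
      using integrable by (subst (asm) integrable_abs_iff) auto
    then show "integrable M (\<lambda>\<omega>. r (X N \<omega>) - v (X N \<omega>))"
      by (subst integrable_X_iff) auto
    show "\<bar>stop_gap \<tau> N \<omega>\<bar> \<le> \<bar>r (X N \<omega>) - v (X N \<omega>)\<bar>" for \<omega>
      by (simp add: stop_gap_def[OF assms])
  qed
  moreover have "(\<integral>\<omega>. \<bar>r (X N \<omega>) - v (X N \<omega>)\<bar> \<partial>M) = (\<integral>x. \<bar>r x - v x\<bar> \<partial>kpow P N z)"
    by (rule integral_X) measurable
  ultimately show ?thesis
    by (simp add: B_def)
qed

lemma continue_gap_hitting_time: "continue_gap (\<lambda>\<omega>. enat (hitting_time N \<omega>)) k = (\<lambda>_. 0)"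
  using hitting_time_continues
  by (auto simp: fun_eq_iff continue_gap_def[OF stopping_time_hitting_time] v_def)

lemma stop_gap_hitting_time:
  assumes "k < N"
  shows "stop_gap (\<lambda>\<omega>. enat (hitting_time N \<omega>)) k = (\<lambda>_. 0)"
proof
  fix \<omega>
  show "stop_gap (\<lambda>\<omega>. enat (hitting_time N \<omega>)) k \<omega> = 0"
  proof (cases "hitting_time N \<omega> = k")
    case True
    then have "\<psi> (X k \<omega>) \<le> r (X k \<omega>)"
      using hitting_time_stops[of N \<omega>] assms by auto
    with True show ?thesis
      by (simp add: stop_gap_def[OF stopping_time_hitting_time] v_def)
  qed (simp add: stop_gap_def[OF stopping_time_hitting_time])
qed

lemma integral_payoff_hitting_time:
  "(\<integral>\<omega>. payoff (hitting_time N \<omega>) \<omega> \<partial>M)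
     = v z + \<beta> ^ N * (\<integral>\<omega>. stop_gap (\<lambda>\<omega>. enat (hitting_time N \<omega>)) N \<omega> \<partial>M)"
proof -
  let ?\<sigma> = "\<lambda>\<omega>. enat (hitting_time N \<omega>)"
  note stopping = stopping_time_hitting_time[of N]
  have "(\<integral>\<omega>. truncated_payoff ?\<sigma> v k \<omega> \<partial>M) = v z" if "k \<le> N" for k
    using that
  proof (induction k)
    case 0
    then show ?case by (simp add: integral_truncated_payoff_0[OF stopping])
  next
    case (Suc k)
    then show ?case
      using integral_truncated_payoff_Suc[OF stopping, of k]
      by (simp add: continue_gap_hitting_time stop_gap_hitting_time)
  qed
  then have "(\<integral>\<omega>. truncated_payoff ?\<sigma> v (Suc N) \<omega> \<partial>M) = v z + \<beta> ^ N * (\<integral>\<omega>. stop_gap ?\<sigma> N \<omega> \<partial>M)"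
    using integral_truncated_payoff_Suc[OF stopping, of N] by (simp add: continue_gap_hitting_time)
  moreover have "truncated_payoff ?\<sigma> v (Suc N) \<omega> = payoff (hitting_time N \<omega>) \<omega>" for \<omega>
    using truncated_payoff_stopped[OF stopping refl] hitting_time_le[of N \<omega>] by simp
  ultimately show ?thesis
    by simp
qed

lemma integral_payoff_hitting_time_ge:
  "v z - \<beta> ^ N * (\<bar>r z\<bar> + (K + C) * \<kappa> ^ N * L z) \<le> (\<integral>\<omega>. payoff (hitting_time N \<omega>) \<omega> \<partial>M)"
proof -
  let ?\<sigma> = "\<lambda>\<omega>. enat (hitting_time N \<omega>)"
  have "- (\<bar>r z\<bar> + (K + C) * \<kappa> ^ N * L z) \<le> (\<integral>\<omega>. stop_gap ?\<sigma> N \<omega> \<partial>M)"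
    using abs_integral_stop_gap_le[OF stopping_time_hitting_time[of N], of N] by linarith
  then have "\<beta> ^ N * - (\<bar>r z\<bar> + (K + C) * \<kappa> ^ N * L z) \<le> \<beta> ^ N * (\<integral>\<omega>. stop_gap ?\<sigma> N \<omega> \<partial>M)"
    using beta_pos by (intro mult_left_mono) auto
  then show ?thesis
    by (simp add: integral_payoff_hitting_time algebra_simps)
qed

lemma value_eq_v:
  "(SUP \<tau> \<in> {\<tau>. enat_stopping_time F \<tau> \<and> (AE \<omega> in M. \<tau> \<omega> \<noteq> \<infinity>)}.
      \<integral>\<omega>. (\<Sum>t<the_enat (\<tau> \<omega>). \<beta> ^ t * c (X t \<omega>)) + \<beta> ^ the_enat (\<tau> \<omega>) * r (X (the_enat (\<tau> \<omega>)) \<omega>) \<partial>M)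
   = v z"
proof -
  define stopping_times where "stopping_times = {\<tau>. enat_stopping_time F \<tau> \<and> (AE \<omega> in M. \<tau> \<omega> \<noteq> \<infinity>)}"
  define V where "V \<tau> = (\<integral>\<omega>. payoff (the_enat (\<tau> \<omega>)) \<omega> \<partial>M)" for \<tau> :: "'w \<Rightarrow> enat"
  have upper: "V \<tau> \<le> v z" if "\<tau> \<in> stopping_times" for \<tau>
    using that integral_payoff_le_v by (auto simp: stopping_times_def V_def)
  have hitting_time_in_stopping_times: "(\<lambda>\<omega>. enat (hitting_time N \<omega>)) \<in> stopping_times" for N
    using stopping_time_hitting_time by (simp add: stopping_times_def)
  have bdd: "bdd_above (V ` stopping_times)"
    using upper by (intro bdd_aboveI2[where M="v z"])
  have lower: "v z - \<beta> ^ N * (\<bar>r z\<bar> + (K + C) * \<kappa> ^ N * L z) \<le> (SUP \<tau>\<in>stopping_times. V \<tau>)" for N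
  proof -
    have "V (\<lambda>\<omega>. enat (hitting_time N \<omega>)) \<le> (SUP \<tau>\<in>stopping_times. V \<tau>)"
      by (rule cSUP_upper[OF hitting_time_in_stopping_times bdd])
    then show ?thesis
      using integral_payoff_hitting_time_ge[of N] by (simp add: V_def)
  qed
  have "(\<lambda>N. \<bar>r z\<bar> * \<beta> ^ N + ((K + C) * L z) * (\<beta> * \<kappa>) ^ N) \<longlonglongrightarrow> \<bar>r z\<bar> * 0 + ((K + C) * L z) * 0"
    using beta_pos beta_lt_1 kappa_gt_1 beta_kappa_lt_1
    by (intro tendsto_add tendsto_mult tendsto_const LIMSEQ_power_zero) auto
  moreover have "\<bar>r z\<bar> * \<beta> ^ N + ((K + C) * L z) * (\<beta> * \<kappa>) ^ N = \<beta> ^ N * (\<bar>r z\<bar> + (K + C) * \<kappa> ^ N * L z)" for N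
    by (simp add: algebra_simps)
  ultimately have "(\<lambda>N. v z - \<beta> ^ N * (\<bar>r z\<bar> + (K + C) * \<kappa> ^ N * L z)) \<longlonglongrightarrow> v z - 0"
    by (intro tendsto_diff tendsto_const) simp
  then have "v z \<le> (SUP \<tau>\<in>stopping_times. V \<tau>)"
    using lower by (intro LIMSEQ_le_const2[where X="\<lambda>N. v z - \<beta> ^ N * (\<bar>r z\<bar> + (K + C) * \<kappa> ^ N * L z)"]) auto
  moreover have "(SUP \<tau>\<in>stopping_times. V \<tau>) \<le> v z"
    using hitting_time_in_stopping_times upper by (intro cSUP_least) auto
  ultimately have "(SUP \<tau>\<in>stopping_times. V \<tau>) = v z"
    by (rule antisym[rotated])
  then show ?thesis
    by (simp add: stopping_times_def V_def payoff_def)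
qed

end

theorem proposition1:
  fixes P :: "'z::topological_space \<Rightarrow> 'z measure"
    and M :: "'z \<Rightarrow> 'w measure" and F :: "'z \<Rightarrow> nat \<Rightarrow> 'w measure"
    and X :: "'z \<Rightarrow> nat \<Rightarrow> 'w \<Rightarrow> 'z"
    and r c g :: "'z \<Rightarrow> real" and \<beta> m d m' d' :: real and n :: nat
  assumes kernel: "P \<in> borel \<rightarrow>\<^sub>M prob_algebra borel"
    and process: "\<And>z. markov_process P z (M z) (F z) (X z)"
    and beta: "0 < \<beta>" "\<beta> < 1"
    and r_meas: "r \<in> borel_measurable borel" and c_meas: "c \<in> borel_measurable borel"
    and g_meas: "g \<in> borel_measurable borel" and g_nonneg: "\<And>z. g z \<ge> 0"
    and md: "m \<ge> 0" "d \<ge> 0" "\<beta> * m < 1"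
    and A_r: "\<And>z. (\<integral>\<^sup>+ z'. ennreal \<bar>r z'\<bar> \<partial>kpow P n z) \<le> ennreal (g z)"
    and A_c: "\<And>z. (\<integral>\<^sup>+ z'. ennreal \<bar>c z'\<bar> \<partial>kpow P n z) \<le> ennreal (g z)"
    and A_g: "\<And>z. (\<integral>\<^sup>+ z'. ennreal (g z') \<partial>P z) \<le> ennreal (m * g z + d)"
    and fin_r: "\<And>z t. t < n \<Longrightarrow> integrable (kpow P t z) r"
    and fin_c: "\<And>z t. t < n \<Longrightarrow> integrable (kpow P t z) c"
    and m'd': "m' > 0" "d' > 0" "m + 2 * m' > 1" "\<beta> * (m + 2 * m') < 1"
      "d' \<ge> d / (m + 2 * m' - 1)"
    and feller: "\<And>h :: 'z \<Rightarrow> real. continuous_on UNIV h \<Longrightarrow> bounded (range h) \<Longrightarrow>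
        continuous_on UNIV (\<lambda>z. \<integral>z'. h z' \<partial>P z) \<and> bounded (range (\<lambda>z. \<integral>z'. h z' \<partial>P z))"
    and cont_c: "continuous_on UNIV c" and cont_r: "continuous_on UNIV r"
    and cont_Pr: "continuous_on UNIV (\<lambda>z. \<integral>z'. \<bar>r z'\<bar> \<partial>P z)"
    and cont_ell: "continuous_on UNIV (ell P r c g n m' d')"
    and cont_Pell: "continuous_on UNIV (\<lambda>z. \<integral>z'. ell P r c g n m' d' z' \<partial>P z)"
  shows "continuous_on UNIV (psi_star P \<beta> r c M F X)
       \<and> continuous_on UNIV (v_star \<beta> r c M F X)"
proof -
  interpret continuation_problem P r c g m d m' d' n \<beta>
    using m'd' feller by unfold_locales
      (auto intro: kernel r_meas c_meas g_meas g_nonneg md A_r A_c A_g fin_r fin_c beta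
        cont_c cont_r cont_Pr cont_ell cont_Pell)
  have v_star_eq: "v_star \<beta> r c M F X = v"
  proof
    fix y
    interpret optimal_stopping P r c g m d m' d' n \<beta> y "M y" "F y" "X y"
      by (intro_locales, unfold_locales) (rule process)
    show "v_star \<beta> r c M F X y = v y"
      unfolding v_star_def by (rule value_eq_v)
  qed
  have "psi_star P \<beta> r c M F X = \<psi>"
    by (simp add: fun_eq_iff psi_star_def v_star_eq psi_eq)
  with v_star_eq show ?thesis
    using continuous_on_psi continuous_on_v by simp
qed

end
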